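(* A gentle quiver $(\Delta,R)$ is of tree type (i.e. $|\Delta_0|=|\Delta_1|+1$) if and only if $f_{(\Delta,R)}=[p+2,\,p]$ for some $p\in\mathbb N$.
   Context: A quiver $\Delta$ has finite vertex set $\Delta_0$, arrow set $\Delta_1$, maps $s,t$. A path of length $n\ge1$ is $(\alpha_1,\dots,\alpha_n)$ with $s\alpha_i=t\alpha_{i+1}$. A gentle quiver is $(\Delta,R)$ with $\Delta$ connected, $R$ a set of paths of length 2, such that: (1) each vertex is start of at most two arrows and end of at most two arrows; (2) for each arrow $\alpha$ at most one $\beta$ with $s\beta=t\alpha$, $(\beta,\alpha)\notin R$ and at most one $\gamma$ with $t\gamma=s\alpha$, $(\alpha,\gamma)\notin R$; (3) for each $\alpha$ at most one $\beta$ with $(\beta,\alpha)\in R$ and at most one $\gamma$ with $(\alpha,\gamma)\in R$; (4) for some $n$ every path of length $n$ has a subpath in $R$. Invariant $f_{(\Delta,R)}:\mathbb N^2\to\mathbb N$: choose $\sigma,\tau:\Delta_1\to\{\pm1\}$ with distinct arrows of same start having opposite $\sigma$, distinct arrows of same end opposite $\tau$, and for $s\alpha=t\beta$: $(\alpha,\beta)\in R$ iff $\sigma\alpha=\tau\beta$; $\sigma\omega=\sigma\alpha_n,\tau\omega=\tau\alpha_1$. Permitted paths: no consecutive pair in $R$, plus trivial $1_{x,\varepsilon}$ ($s=t=x$, $\sigma=\varepsilon,\tau=-\varepsilon$); maximal if no arrow $\alpha$ with $s\alpha=t\omega,\sigma\alpha=-\tau\omega$ and no $\beta$ with $t\beta=s\omega,\tau\beta=-\sigma\omega$;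 set $\mathcal M$. Antipaths: all consecutive pairs in $R$, plus trivial $1'_{x,\varepsilon}$ ($\sigma=\tau=\varepsilon$); maximal if no $\alpha$ with $s\alpha=t\omega,\sigma\alpha=\tau\omega$ and no $\beta$ with $t\beta=s\omega,\tau\beta=\sigma\omega$; set $\mathcal N$. $\phi:\mathcal M\to\mathcal N$, $\omega\mapsto$ unique $\omega'$ with $t\omega'=t\omega,\tau\omega'=-\tau\omega$; $\psi:\mathcal N\to\mathcal M$, $\omega\mapsto$ unique $\omega'$ with $s\omega'=s\omega,\sigma\omega'=-\sigma\omega$; $\Phi=\phi\psi$; $\Phi$-orbit: $p=|\mathcal O|$, $q=$ total length. $\mathcal C$: arrows $\alpha$ with $(\alpha)$ not a subpath of a maximal antipath; $\Psi(\alpha)=$ unique $\beta\in\mathcal C$ with $t\beta=s\alpha,\tau\beta=\sigma\alpha$; $\Psi$-orbit: $p=0$, $q=|\mathcal O|$. $f(p,q)=$ number of orbits with these values. $[p,q]$ is the characteristic function of $\{(p,q)\}$. *)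

theory Defs
  imports Main
begin

text \<open>A path (alpha_1,...,alpha_n) is the nonempty list [alpha_1,...,alpha_n] with
s alpha_i = t alpha_(i+1); its start is s alpha_n and its end is t alpha_1.\<close>

datatype ('v,'a) qpath = Triv 'v int | Arr "'a list"

fun psrc :: "('a \<Rightarrow> 'v) \<Rightarrow> ('v,'a) qpath \<Rightarrow> 'v" where
  "psrc s (Triv x e) = x" | "psrc s (Arr l) = s (last l)"

fun ptgt :: "('a \<Rightarrow> 'v) \<Rightarrow> ('v,'a) qpath \<Rightarrow> 'v" where
  "ptgt t (Triv x e) = x" | "ptgt t (Arr l) = t (hd l)"

fun plen :: "('v,'a) qpath \<Rightarrow> nat" where
  "plen (Triv x e) = 0" | "plen (Arr l) = length l"

fun sig_perm :: "('a \<Rightarrow> int) \<Rightarrow> ('v,'a) qpath \<Rightarrow> int" where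
  "sig_perm \<sigma> (Triv x e) = e" | "sig_perm \<sigma> (Arr l) = \<sigma> (last l)"
fun tau_perm :: "('a \<Rightarrow> int) \<Rightarrow> ('v,'a) qpath \<Rightarrow> int" where
  "tau_perm \<tau> (Triv x e) = - e" | "tau_perm \<tau> (Arr l) = \<tau> (hd l)"

fun sig_anti :: "('a \<Rightarrow> int) \<Rightarrow> ('v,'a) qpath \<Rightarrow> int" where
  "sig_anti \<sigma> (Triv x e) = e" | "sig_anti \<sigma> (Arr l) = \<sigma> (last l)"
fun tau_anti :: "('a \<Rightarrow> int) \<Rightarrow> ('v,'a) qpath \<Rightarrow> int" where
  "tau_anti \<tau> (Triv x e) = e" | "tau_anti \<tau> (Arr l) = \<tau> (hd l)"

definition is_qpath :: "'a set \<Rightarrow> ('a \<Rightarrow> 'v) \<Rightarrow> ('a \<Rightarrow> 'v) \<Rightarrow> 'a list \<Rightarrow> bool" where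
  "is_qpath A s t l \<longleftrightarrow> l \<noteq> [] \<and> set l \<subseteq> A \<and>
     (\<forall>i. Suc i < length l \<longrightarrow> s (l ! i) = t (l ! Suc i))"

definition gentle :: "'v set \<Rightarrow> 'a set \<Rightarrow> ('a \<Rightarrow> 'v) \<Rightarrow> ('a \<Rightarrow> 'v) \<Rightarrow> ('a \<times> 'a) set \<Rightarrow> bool" where
  "gentle V A s t R \<longleftrightarrow>
     finite V \<and> finite A \<and> (\<forall>a\<in>A. s a \<in> V \<and> t a \<in> V) \<and>
     (\<forall>(a,b)\<in>R. a \<in> A \<and> b \<in> A \<and> s a = t b) \<and>
     V \<noteq> {} \<and>
     (\<forall>x\<in>V. \<forall>y\<in>V. (x,y) \<in> ({(s a, t a) | a. a \<in> A} \<union> {(t a, s a) | a. a \<in> A})\<^sup>*) \<and>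
     (\<forall>x\<in>V. card {a\<in>A. s a = x} \<le> 2 \<and> card {a\<in>A. t a = x} \<le> 2) \<and>
     (\<forall>a\<in>A. card {b\<in>A. s b = t a \<and> (b,a) \<notin> R} \<le> 1 \<and>
             card {c\<in>A. t c = s a \<and> (a,c) \<notin> R} \<le> 1) \<and>
     (\<forall>a\<in>A. card {b. (b,a) \<in> R} \<le> 1 \<and> card {c. (a,c) \<in> R} \<le> 1) \<and>
     (\<exists>n\<ge>1. \<forall>l. is_qpath A s t l \<and> length l = n \<longrightarrow>
                 (\<exists>i. Suc i < n \<and> (l ! i, l ! Suc i) \<in> R))"

definition valid_signs :: "'a set \<Rightarrow> ('a \<Rightarrow> 'v) \<Rightarrow> ('a \<Rightarrow> 'v) \<Rightarrow> ('a \<times> 'a) set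
     \<Rightarrow> ('a \<Rightarrow> int) \<Rightarrow> ('a \<Rightarrow> int) \<Rightarrow> bool" where
  "valid_signs A s t R \<sigma> \<tau> \<longleftrightarrow>
     (\<forall>a\<in>A. \<sigma> a \<in> {1, -1} \<and> \<tau> a \<in> {1, -1}) \<and>
     (\<forall>a\<in>A. \<forall>b\<in>A. a \<noteq> b \<and> s a = s b \<longrightarrow> \<sigma> a = - \<sigma> b) \<and>
     (\<forall>a\<in>A. \<forall>b\<in>A. a \<noteq> b \<and> t a = t b \<longrightarrow> \<tau> a = - \<tau> b) \<and>
     (\<forall>a\<in>A. \<forall>b\<in>A. s a = t b \<longrightarrow> ((a,b) \<in> R \<longleftrightarrow> \<sigma> a = \<tau> b))"

definition permitted :: "'v set \<Rightarrow> 'a set \<Rightarrow> ('a \<Rightarrow> 'v) \<Rightarrow> ('a \<Rightarrow> 'v) \<Rightarrow> ('a \<times> 'a) set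
     \<Rightarrow> ('v,'a) qpath \<Rightarrow> bool" where
  "permitted V A s t R w \<longleftrightarrow> (case w of
      Triv x e \<Rightarrow> x \<in> V \<and> e \<in> {1, -1}
    | Arr l \<Rightarrow> is_qpath A s t l \<and> (\<forall>i. Suc i < length l \<longrightarrow> (l ! i, l ! Suc i) \<notin> R))"

definition antipath :: "'v set \<Rightarrow> 'a set \<Rightarrow> ('a \<Rightarrow> 'v) \<Rightarrow> ('a \<Rightarrow> 'v) \<Rightarrow> ('a \<times> 'a) set
     \<Rightarrow> ('v,'a) qpath \<Rightarrow> bool" where
  "antipath V A s t R w \<longleftrightarrow> (case w of
      Triv x e \<Rightarrow> x \<in> V \<and> e \<in> {1, -1}
    | Arr l \<Rightarrow> is_qpath A s t l \<and> (\<forall>i. Suc i < length l \<longrightarrow> (l ! i, l ! Suc i) \<in> R))"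

definition maxperm where
  "maxperm V A s t R \<sigma> \<tau> = {w. permitted V A s t R w \<and>
     \<not> (\<exists>a\<in>A. s a = ptgt t w \<and> \<sigma> a = - tau_perm \<tau> w) \<and>
     \<not> (\<exists>b\<in>A. t b = psrc s w \<and> \<tau> b = - sig_perm \<sigma> w)}"

definition maxanti where
  "maxanti V A s t R \<sigma> \<tau> = {w. antipath V A s t R w \<and>
     \<not> (\<exists>a\<in>A. s a = ptgt t w \<and> \<sigma> a = tau_anti \<tau> w) \<and>
     \<not> (\<exists>b\<in>A. t b = psrc s w \<and> \<tau> b = sig_anti \<sigma> w)}"

definition ag_phi where
  "ag_phi V A s t R \<sigma> \<tau> w = (THE w'. w' \<in> maxanti V A s t R \<sigma> \<tau> \<and>
      ptgt t w' = ptgt t w \<and> tau_anti \<tau> w' = - tau_perm \<tau> w)"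

definition ag_psi where
  "ag_psi V A s t R \<sigma> \<tau> w = (THE w'. w' \<in> maxperm V A s t R \<sigma> \<tau> \<and>
      psrc s w' = psrc s w \<and> sig_perm \<sigma> w' = - sig_anti \<sigma> w)"

definition ag_Phi where
  "ag_Phi V A s t R \<sigma> \<tau> = ag_phi V A s t R \<sigma> \<tau> \<circ> ag_psi V A s t R \<sigma> \<tau>"

definition ag_C where
  "ag_C V A s t R \<sigma> \<tau> = {a\<in>A. \<forall>w\<in>maxanti V A s t R \<sigma> \<tau>.
      (case w of Triv x e \<Rightarrow> True | Arr l \<Rightarrow> a \<notin> set l)}"

definition ag_Psi where
  "ag_Psi V A s t R \<sigma> \<tau> a = (THE b. b \<in> ag_C V A s t R \<sigma> \<tau> \<and> t b = s a \<and> \<tau> b = \<sigma> a)"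

definition orbits :: "('b \<Rightarrow> 'b) \<Rightarrow> 'b set \<Rightarrow> 'b set set" where
  "orbits f X = {{(f ^^ n) x | n. True} | x. x \<in> X}"

definition AG_with where
  "AG_with V A s t R \<sigma> \<tau> p q =
     card {Ob \<in> orbits (ag_Phi V A s t R \<sigma> \<tau>) (maxanti V A s t R \<sigma> \<tau>).
             card Ob = p \<and> (\<Sum>w\<in>Ob. plen w) = q}
   + card {Ob \<in> orbits (ag_Psi V A s t R \<sigma> \<tau>) (ag_C V A s t R \<sigma> \<tau>).
             p = 0 \<and> card Ob = q}"

definition AG_invariant :: "'v set \<Rightarrow> 'a set \<Rightarrow> ('a \<Rightarrow> 'v) \<Rightarrow> ('a \<Rightarrow> 'v) \<Rightarrow> ('a \<times> 'a) set
     \<Rightarrow> nat \<Rightarrow> nat \<Rightarrow> nat" where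
  "AG_invariant V A s t R =
     (let st = (SOME st. valid_signs A s t R (fst st) (snd st))
      in AG_with V A s t R (fst st) (snd st))"

definition char_fun :: "nat \<Rightarrow> nat \<Rightarrow> nat \<Rightarrow> nat \<Rightarrow> nat" where
  "char_fun a b = (\<lambda>p q. if p = a \<and> q = b then 1 else 0)"

end

theory Submission
  imports Defs
begin

text \<open>Every vertex x carries two ports (x, 1) and (x, -1). An arrow a leaves the port
  (s a, \<sigma> a) and enters (t a, \<tau> a) when read in an antipath, (t a, -\<tau> a) in a permitted
  path. Following arrows is a partial injection of the 2|V| ports with an |A|-element domain,
  whose maximal runs are exactly the maximal antipaths, resp. the maximal permitted paths; so
  there are 2|V| - |A| of each, and \<phi>, \<psi> become maps between the starts of runs.

  If f = [p + 2, p], then \<C> is empty and a single \<Phi>-orbit consists of p + 2 maximal antipaths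
  of total length p covering all arrows, so p = 2|V| - |A| - 2 \<ge> |A|; connectedness gives
  |V| \<le> |A| + 1. Conversely, in a tree a cycle of the step map would give a cycle in the graph,
  so the maximal antipaths cover each arrow exactly once and have total length |A|. Cutting the
  tree at the arrow leaving a port c shows that \<phi> of the permitted path through c lies in the
  \<Phi>-orbit of the antipath through c; together with connectedness, \<Phi> is transitive.\<close>

lemma funpow_closed: "f ` Z \<subseteq> Z \<Longrightarrow> c \<in> Z \<Longrightarrow> (f ^^ n) c \<in> Z"
  by (induction n) auto

lemma funpow_returns_if_inj_on_finite:
  assumes fin: "finite Z" and inj: "inj_on f Z" and closed: "f ` Z \<subseteq> Z" and c: "c \<in> Z"
  shows "\<exists>k>0. (f ^^ k) c = c"
proof -
  have "\<not> inj_on (\<lambda>n. (f ^^ n) c) {0..card Z}"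
  proof
    assume "inj_on (\<lambda>n. (f ^^ n) c) {0..card Z}"
    moreover have "(\<lambda>n. (f ^^ n) c) ` {0..card Z} \<subseteq> Z" using funpow_closed[OF closed c] by auto
    ultimately have "card {0..card Z} \<le> card Z" using card_inj_on_le fin by blast
    then show False by simp
  qed
  then obtain i j where ij: "i < j" "(f ^^ i) c = (f ^^ j) c"
    unfolding inj_on_def by (metis linorder_neqE_nat)
  have "(f ^^ (j - i)) c = c" using ij
  proof (induction i arbitrary: j)
    case (Suc i)
    then obtain j' where j': "j = Suc j'" by (cases j) auto
    have "f ((f ^^ i) c) = f ((f ^^ j') c)" using Suc.prems j' by simp
    then have "(f ^^ i) c = (f ^^ j') c"
      using inj funpow_closed[OF closed c] unfolding inj_on_def by blast
    then show ?case using Suc j' by simp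
  qed simp
  then show ?thesis using ij(1) by (intro exI[of _ "j - i"]) auto
qed

definition funpow_orbit :: "('b \<Rightarrow> 'b) \<Rightarrow> 'b \<Rightarrow> 'b set" where
  "funpow_orbit f x = {(f ^^ n) x | n. True}"

lemma orbits_eq_image_funpow_orbit: "orbits f X = funpow_orbit f ` X"
  unfolding orbits_def funpow_orbit_def by auto

lemma funpow_orbit_refl: "x \<in> funpow_orbit f x"
  unfolding funpow_orbit_def by (metis (mono_tags, lifting) funpow_0 mem_Collect_eq)

lemma funpow_orbit_step: "f x \<in> funpow_orbit f x"
  unfolding funpow_orbit_def by (rule CollectI, rule exI[of _ "Suc 0"]) simp

lemma funpow_orbit_trans: "y \<in> funpow_orbit f x \<Longrightarrow> z \<in> funpow_orbit f y \<Longrightarrow> z \<in> funpow_orbit f x"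
  unfolding funpow_orbit_def by (auto simp: funpow_add[symmetric]) (metis comp_apply funpow_add)

lemma funpow_orbit_subset: "f ` Z \<subseteq> Z \<Longrightarrow> x \<in> Z \<Longrightarrow> funpow_orbit f x \<subseteq> Z"
  unfolding funpow_orbit_def by (auto intro: funpow_closed)

lemma funpow_orbit_sym:
  assumes "finite Z" "inj_on f Z" "f ` Z \<subseteq> Z" and x: "x \<in> Z" and y: "y \<in> funpow_orbit f x"
  shows "x \<in> funpow_orbit f y"
proof -
  obtain n where n: "y = (f ^^ n) x" using y unfolding funpow_orbit_def by auto
  obtain k where k: "k > 0" "(f ^^ k) x = x"
    using funpow_returns_if_inj_on_finite[OF assms(1-4)] by blast
  have periodic: "(f ^^ (k * m)) x = x" for m
  proof (induction m)
    case (Suc m)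
    have "(f ^^ (k * Suc m)) x = (f ^^ (k * m)) ((f ^^ k) x)"
      by (simp only: mult_Suc_right add.commute[of k] funpow_add comp_apply)
    then show ?case using Suc k(2) by simp
  qed simp
  have "k * n - n + n = k * n" using k(1) by simp
  then have "(f ^^ (k * n - n)) y = (f ^^ (k * n)) x"
    unfolding n by (metis comp_apply funpow_add)
  then show ?thesis unfolding funpow_orbit_def using periodic by auto
qed

lemma finite_orbits: "finite X \<Longrightarrow> finite (orbits f X)"
  by (simp add: orbits_eq_image_funpow_orbit)

lemma orbits_eq_singleton_imp:
  assumes closed: "f ` X \<subseteq> X" and orbits: "orbits f X = {Ob}" shows "Ob = X"
proof
  have image: "funpow_orbit f ` X = {Ob}" using orbits unfolding orbits_eq_image_funpow_orbit .
  show "X \<subseteq> Ob"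
  proof
    fix x assume "x \<in> X"
    then have "funpow_orbit f x = Ob" using image by (metis imageI singletonD)
    then show "x \<in> Ob" using funpow_orbit_refl by metis
  qed
  have "Ob \<in> funpow_orbit f ` X" using image by simp
  then obtain x where "x \<in> X" "Ob = funpow_orbit f x" by (rule imageE)
  then show "Ob \<subseteq> X" using funpow_orbit_subset[OF closed] by blast
qed

lemma card_fibres_eq_char_fun_imp:
  assumes fin: "finite X"
    and fibres: "\<And>p q. card {x\<in>X. P x = p \<and> Q x = q} = char_fun a b p q"
  shows "\<exists>x. X = {x} \<and> P x = a \<and> Q x = b"
proof -
  have all: "P x = a \<and> Q x = b" if "x \<in> X" for x
  proof -
    have "card {y\<in>X. P y = P x \<and> Q y = Q x} > 0" using fin that by (auto simp: card_gt_0_iff)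
    then show ?thesis using fibres[of "P x" "Q x"] unfolding char_fun_def by (auto split: if_splits)
  qed
  then have "{x\<in>X. P x = a \<and> Q x = b} = X" by blast
  then have "card X = 1" using fibres[of a b] unfolding char_fun_def by simp
  then show ?thesis using all by (metis card_1_singletonE singletonI)
qed

text \<open>An injective map f from a subset D of a finite set X into X splits X into cycles inside D
  and runs; a run starts outside f ` D and ends at its first point outside D.\<close>

locale partial_injection =
  fixes X :: "'c set" and D :: "'c set" and f :: "'c \<Rightarrow> 'c"
  assumes finite_X: "finite X" and D_subset: "D \<subseteq> X" and maps_into: "f ` D \<subseteq> X"
    and inj: "inj_on f D"
begin

definition "starts = X - f ` D"
definition "periodic c \<longleftrightarrow> (\<exists>k>0. (\<forall>m<k. (f ^^ m) c \<in> D) \<and> (f ^^ k) c = c)"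
definition "reaches a k c \<longleftrightarrow> (\<forall>m<k. (f ^^ m) a \<in> D) \<and> (f ^^ k) a = c"
definition "run_length a = (LEAST n. (f ^^ n) a \<notin> D)"
definition "run_end a = (f ^^ run_length a) a"
definition "run_start c = (THE a. a \<in> starts \<and> (\<exists>k. reaches a k c))"
definition "unreached = {c\<in>X. \<not> (\<exists>a\<in>starts. \<exists>k. reaches a k c)}"

lemma reaches_in_X: "a \<in> X \<Longrightarrow> \<forall>m<k. (f ^^ m) a \<in> D \<Longrightarrow> (f ^^ k) a \<in> X"
proof (induction k)
  case (Suc k) then show ?case using maps_into by auto
qed simp

lemma reaches_Suc: "reaches a k c \<Longrightarrow> c \<in> D \<Longrightarrow> reaches a (Suc k) (f c)"
  unfolding reaches_def by (auto simp: less_Suc_eq)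

lemma reaches_before:
  assumes "reaches a k c" "j < k" shows "(f ^^ j) a \<in> D"
  using assms unfolding reaches_def by auto

lemma run_leaves_D:
  assumes a: "a \<in> starts" shows "\<exists>n. (f ^^ n) a \<notin> D"
proof (rule ccontr)
  assume "\<not> ?thesis"
  then have in_D: "\<forall>n. (f ^^ n) a \<in> D" by auto
  let ?Z = "range (\<lambda>n. (f ^^ n) a)"
  have Z_D: "?Z \<subseteq> D" using in_D by auto
  have "?Z \<subseteq> X" using Z_D D_subset by blast
  then have fin: "finite ?Z" using finite_X by (rule finite_subset)
  have closed: "f ` ?Z \<subseteq> ?Z"
  proof (rule image_subsetI)
    fix x assume "x \<in> ?Z"
    then obtain n where "x = (f ^^ n) a" by auto
    then have "f x = (f ^^ Suc n) a" by simp
    then show "f x \<in> ?Z" by (metis rangeI)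
  qed
  have "a \<in> ?Z" by (metis funpow_0 rangeI)
  then obtain k where k: "k > 0" "(f ^^ k) a = a"
    using funpow_returns_if_inj_on_finite[OF fin inj_on_subset[OF inj Z_D] closed] by blast
  then obtain k' where "k = Suc k'" by (cases k) auto
  then have "a = f ((f ^^ k') a)" using k(2) by simp
  then show False using a in_D unfolding starts_def by auto
qed

lemma run_length:
  assumes a: "a \<in> starts"
  shows "(f ^^ run_length a) a \<notin> D" "\<And>m. m < run_length a \<Longrightarrow> (f ^^ m) a \<in> D"
proof -
  obtain n where "(f ^^ n) a \<notin> D" using run_leaves_D[OF a] by blast
  then show "(f ^^ run_length a) a \<notin> D" unfolding run_length_def by (rule LeastI)
  show "\<And>m. m < run_length a \<Longrightarrow> (f ^^ m) a \<in> D"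
    unfolding run_length_def using not_less_Least by blast
qed

lemma reaches_unique:
  assumes a: "a \<in> starts" and b: "b \<in> starts" and ra: "reaches a i c" and rb: "reaches b j c"
  shows "a = b \<and> i = j"
  using ra rb
proof (induction i arbitrary: j c)
  case 0
  then have a_eq: "a = (f ^^ j) b" unfolding reaches_def by simp
  show ?case
  proof (cases j)
    case (Suc j')
    then have "a = f ((f ^^ j') b)" "(f ^^ j') b \<in> D"
      using a_eq "0.prems"(2) unfolding reaches_def by auto
    then show ?thesis using a unfolding starts_def by auto
  qed (use a_eq in simp)
next
  case (Suc i)
  show ?case
  proof (cases j)
    case 0
    then have "b = f ((f ^^ i) a)" "(f ^^ i) a \<in> D" using Suc.prems unfolding reaches_def by auto
    then show ?thesis using b unfolding starts_def by auto
  next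
    case (Suc j')
    then have "(f ^^ i) a \<in> D" "(f ^^ j') b \<in> D" "f ((f ^^ i) a) = f ((f ^^ j') b)"
      using Suc.prems unfolding reaches_def by auto
    then have "(f ^^ i) a = (f ^^ j') b" using inj unfolding inj_on_def by blast
    then have "reaches a i ((f ^^ i) a)" "reaches b j' ((f ^^ i) a)"
      using Suc.prems \<open>j = Suc j'\<close> unfolding reaches_def by auto
    from Suc.IH[OF this] show ?thesis using \<open>j = Suc j'\<close> by simp
  qed
qed

lemma reaches_less_run_length:
  assumes "a \<in> starts" "reaches a k c" "c \<in> D" shows "k < run_length a"
  using assms run_length[OF assms(1)] unfolding reaches_def by (metis linorder_neqE_nat)

lemma reaches_first:
  assumes "a \<in> starts" "reaches a k c" "j < k" shows "(f ^^ j) a \<noteq> c"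
proof
  assume "(f ^^ j) a = c"
  then have "reaches a j c" using assms(2,3) unfolding reaches_def by auto
  then show False using reaches_unique[OF assms(1,1) _ assms(2)] assms(3) by blast
qed

lemma unreached_subset_image: "unreached \<subseteq> f ` (D \<inter> unreached)"
proof
  fix d assume d: "d \<in> unreached"
  have "reaches d 0 d" by (simp add: reaches_def)
  then have "d \<notin> starts" using d unfolding unreached_def by blast
  then obtain d' where d': "d' \<in> D" "f d' = d" using d unfolding starts_def unreached_def by auto
  have "\<not> reaches a k d'" if "a \<in> starts" for a k
    using reaches_Suc[of a k d'] d d' that unfolding unreached_def by auto
  then have "d' \<in> unreached" using d' D_subset unfolding unreached_def by auto
  then show "d \<in> f ` (D \<inter> unreached)" using d' by auto
qed

lemma unreached_subset_D: "unreached \<subseteq> D"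
proof -
  have fin: "finite unreached" using finite_X unfolding unreached_def by auto
  have "card unreached \<le> card (D \<inter> unreached)"
    using card_mono[OF finite_imageI unreached_subset_image] card_image_le[of "D \<inter> unreached" f]
      fin by (meson finite_Int le_trans)
  then have "D \<inter> unreached = unreached" using fin by (intro card_seteq) auto
  then show ?thesis by blast
qed

lemma unreached_closed: "f ` unreached \<subseteq> unreached"
proof
  fix y assume "y \<in> f ` unreached"
  then obtain d where d: "d \<in> unreached" "y = f d" by auto
  then have dD: "d \<in> D" using unreached_subset_D by blast
  have "\<not> reaches a k y" if a: "a \<in> starts" for a k
  proof (cases k)
    case 0
    then show ?thesis using a d dD unfolding reaches_def starts_def by auto
  next
    case (Suc k')
    show ?thesis
    proof
      assume r: "reaches a k y"
      then have "f ((f ^^ k') a) = f d" "(f ^^ k') a \<in> D" using d Suc unfolding reaches_def by auto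
      then have "(f ^^ k') a = d" using inj dD unfolding inj_on_def by blast
      then have "reaches a k' d" using r Suc unfolding reaches_def by auto
      then show False using d a unfolding unreached_def by blast
    qed
  qed
  moreover have "y \<in> X" using d dD maps_into by auto
  ultimately show "y \<in> unreached" unfolding unreached_def by blast
qed

lemma unreached_periodic:
  assumes c: "c \<in> unreached" shows "periodic c"
proof -
  have fin: "finite unreached" using finite_X unfolding unreached_def by auto
  obtain k where "k > 0" "(f ^^ k) c = c"
    using funpow_returns_if_inj_on_finite[OF fin inj_on_subset[OF inj unreached_subset_D]
        unreached_closed c] by blast
  moreover have "(f ^^ m) c \<in> D" for m
    using funpow_closed[OF unreached_closed c] unreached_subset_D by blast
  ultimately show ?thesis unfolding periodic_def by blast
qed

lemma run_start:
  assumes c: "c \<in> X" and np: "\<not> periodic c"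
  shows "run_start c \<in> starts" "\<exists>k. reaches (run_start c) k c"
proof -
  obtain a k where ak: "a \<in> starts" "reaches a k c"
    using unreached_periodic c np unfolding unreached_def by blast
  have "run_start c = a" unfolding run_start_def
    by (rule the_equality) (use ak reaches_unique in blast)+
  then show "run_start c \<in> starts" "\<exists>k. reaches (run_start c) k c" using ak by auto
qed

lemma run_start_eqI: "a \<in> starts \<Longrightarrow> reaches a k c \<Longrightarrow> run_start c = a"
  unfolding run_start_def by (rule the_equality) (use reaches_unique in blast)+

lemma run_start_of_start: "a \<in> starts \<Longrightarrow> run_start a = a"
  by (rule run_start_eqI[of a 0]) (auto simp: reaches_def)

lemma run_start_step: "c \<in> D \<Longrightarrow> \<not> periodic c \<Longrightarrow> run_start (f c) = run_start c"
  using run_start[of c] reaches_Suc run_start_eqI D_subset by blast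

lemma not_periodic_if_notin_D: "c \<notin> D \<Longrightarrow> \<not> periodic c"
  unfolding periodic_def by (metis funpow_0)

lemma run_length_eqI:
  assumes a: "a \<in> starts" and r: "reaches a k c" and c: "c \<notin> D" shows "run_length a = k"
proof -
  have "run_length a \<le> k" unfolding run_length_def using r c unfolding reaches_def
    by (auto intro: Least_le)
  moreover have "\<not> run_length a < k" using r run_length[OF a] unfolding reaches_def by auto
  ultimately show ?thesis by simp
qed

lemma run_end_run_start: "c \<in> X \<Longrightarrow> c \<notin> D \<Longrightarrow> run_end (run_start c) = c"
  using run_start[OF _ not_periodic_if_notin_D] run_length_eqI unfolding run_end_def reaches_def
  by metis

lemma run_end_inj: "a \<in> starts \<Longrightarrow> b \<in> starts \<Longrightarrow> run_end a = run_end b \<Longrightarrow> a = b"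
  using reaches_unique[of a b "run_length a" "run_end a" "run_length b"] run_length
  unfolding reaches_def run_end_def by metis

lemma run_end_in_X: "a \<in> starts \<Longrightarrow> run_end a \<in> X"
  unfolding run_end_def using reaches_in_X run_length starts_def by auto

text \<open>Without cycles the runs partition D.\<close>

lemma sum_run_length:
  assumes acyclic: "\<And>c. c \<in> D \<Longrightarrow> \<not> periodic c"
  shows "(\<Sum>a\<in>starts. run_length a) = card D"
proof -
  define S where "S = (SIGMA a:starts. {..<run_length a})"
  have "finite starts" using finite_X unfolding starts_def by simp
  then have "card S = (\<Sum>a\<in>starts. run_length a)" unfolding S_def by (simp add: card_SigmaI)
  moreover have "bij_betw (\<lambda>(a,i). (f ^^ i) a) S D"
  proof (rule bij_betw_imageI)
    show "inj_on (\<lambda>(a,i). (f ^^ i) a) S"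
    proof (rule inj_onI, clarify)
      fix a i a' i' assume a: "(a,i) \<in> S" and a': "(a',i') \<in> S"
        and eq: "(f ^^ i) a = (f ^^ i') a'"
      have "reaches a i ((f ^^ i) a)" "reaches a' i' ((f ^^ i) a)"
        using a a' eq run_length(2) unfolding S_def reaches_def by auto
      then show "a = a' \<and> i = i'" using reaches_unique a a' unfolding S_def by blast
    qed
    show "(\<lambda>(a,i). (f ^^ i) a) ` S = D"
    proof
      show "(\<lambda>(a,i). (f ^^ i) a) ` S \<subseteq> D" unfolding S_def using run_length(2) by auto
      show "D \<subseteq> (\<lambda>(a,i). (f ^^ i) a) ` S"
      proof
        fix d assume d: "d \<in> D"
        then have "d \<in> X" "\<not> periodic d" using D_subset acyclic by auto
        then obtain k where k: "reaches (run_start d) k d" and start: "run_start d \<in> starts"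
          using run_start by blast
        then have "(run_start d, k) \<in> S"
          using reaches_less_run_length[OF start k d] unfolding S_def by simp
        moreover have "d = (f ^^ k) (run_start d)" using k unfolding reaches_def by simp
        ultimately show "d \<in> (\<lambda>(a,i). (f ^^ i) a) ` S" by force
      qed
    qed
  qed
  ultimately show ?thesis by (simp add: bij_betw_same_card)
qed

end

definition edges_of :: "'a set \<Rightarrow> ('a \<Rightarrow> 'v) \<Rightarrow> ('a \<Rightarrow> 'v) \<Rightarrow> ('v \<times> 'v) set" where
  "edges_of B s t = {(s a, t a) | a. a \<in> B} \<union> {(t a, s a) | a. a \<in> B}"

lemma edges_of_rtrancl_sym:
  assumes "(x, y) \<in> (edges_of B s t)\<^sup>*" shows "(y, x) \<in> (edges_of B s t)\<^sup>*"
proof -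
  have "(edges_of B s t)\<inverse> = edges_of B s t" unfolding edges_of_def by auto
  moreover have "(y, x) \<in> ((edges_of B s t)\<inverse>)\<^sup>*" using assms by (rule rtrancl_converseI)
  ultimately show ?thesis by simp
qed

lemma edges_of_rtrancl_contract:
  assumes "(x, y) \<in> (edges_of B s t)\<^sup>*" and "m (s a) = m (t a)"
  shows "(m x, m y) \<in> (edges_of (B - {a}) (m \<circ> s) (m \<circ> t))\<^sup>*"
  using assms(1)
proof (induction rule: rtrancl_induct)
  case (step y z)
  from step(2) obtain b where b: "b \<in> B" "(y = s b \<and> z = t b) \<or> (y = t b \<and> z = s b)"
    unfolding edges_of_def by auto
  have "(m y, m z) \<in> (edges_of (B - {a}) (m \<circ> s) (m \<circ> t))\<^sup>*"
  proof (cases "b = a")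
    case False
    then have "(m y, m z) \<in> edges_of (B - {a}) (m \<circ> s) (m \<circ> t)"
      using b unfolding edges_of_def by auto
    then show ?thesis by simp
  qed (use b assms(2) in auto)
  with step(3) show ?case by (rule rtrancl_trans)
qed simp

lemma edges_of_rtrancl_remove:
  assumes a: "(s a, t a) \<in> (edges_of (B - {a}) s t)\<^sup>*" and xy: "(x, y) \<in> (edges_of B s t)\<^sup>*"
  shows "(x, y) \<in> (edges_of (B - {a}) s t)\<^sup>*"
  using xy
proof (induction rule: rtrancl_induct)
  case (step y z)
  from step(2) obtain b where b: "b \<in> B" "(y = s b \<and> z = t b) \<or> (y = t b \<and> z = s b)"
    unfolding edges_of_def by auto
  have "(y, z) \<in> (edges_of (B - {a}) s t)\<^sup>*"
  proof (cases "b = a")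
    case True
    then show ?thesis using b(2) a edges_of_rtrancl_sym[OF a] by auto
  next
    case False
    then have "(y, z) \<in> edges_of (B - {a}) s t" using b unfolding edges_of_def by auto
    then show ?thesis by simp
  qed
  with step(3) show ?case by (rule rtrancl_trans)
qed simp

text \<open>Contracting an arrow a loses one vertex and one arrow (or just the arrow, if it is a loop).\<close>

lemma card_le_Suc_card_if_connected:
  assumes "finite B" "finite V" "\<forall>a\<in>B. s a \<in> V \<and> t a \<in> V"
    and "\<forall>x\<in>V. \<forall>y\<in>V. (x, y) \<in> (edges_of B s t)\<^sup>*"
  shows "card V \<le> card B + 1"
  using assms
proof (induction "card B" arbitrary: B V s t)
  case 0
  then have "edges_of B s t = {}" unfolding edges_of_def by simp
  then have "\<forall>x\<in>V. \<forall>y\<in>V. x = y" using 0 by simp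
  then show ?case using card_le_Suc0_iff_eq[OF \<open>finite V\<close>] by simp
next
  case (Suc n)
  then obtain a where a: "a \<in> B" by (metis card.empty ex_in_conv nat.simps(3))
  have card_B: "card (B - {a}) = n" using Suc a by simp
  show ?case
  proof (cases "s a = t a")
    case True
    have "card V \<le> card (B - {a}) + 1"
    proof (rule Suc.hyps(1)[OF card_B[symmetric]])
      show "\<forall>x\<in>V. \<forall>y\<in>V. (x, y) \<in> (edges_of (B - {a}) s t)\<^sup>*"
        using edges_of_rtrancl_contract[of _ _ B s t id a] True Suc.prems(4) by simp
    qed (use Suc in auto)
    then show ?thesis using card_B Suc by simp
  next
    case False
    define m where "m v = (if v = t a then s a else v)" for v
    have m_a: "m (s a) = m (t a)" unfolding m_def using False by simp
    let ?E = "edges_of (B - {a}) (m \<circ> s) (m \<circ> t)"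
    have "card (V - {t a}) \<le> card (B - {a}) + 1"
    proof (rule Suc.hyps(1)[OF card_B[symmetric], of _ "m \<circ> s" "m \<circ> t"])
      show "\<forall>b\<in>B - {a}. (m \<circ> s) b \<in> V - {t a} \<and> (m \<circ> t) b \<in> V - {t a}"
        using Suc.prems(3) a False unfolding m_def by auto
      show "\<forall>x\<in>V - {t a}. \<forall>y\<in>V - {t a}. (x, y) \<in> ?E\<^sup>*"
      proof (intro ballI)
        fix x y assume "x \<in> V - {t a}" "y \<in> V - {t a}"
        then have "m x = x" "m y = y" "(x, y) \<in> (edges_of B s t)\<^sup>*"
          using Suc.prems(4) unfolding m_def by auto
        then show "(x, y) \<in> ?E\<^sup>*" using edges_of_rtrancl_contract[of x y B s t m a] m_a
          by simp
      qed
    qed (use Suc in auto)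
    moreover have "t a \<in> V" using Suc.prems(3) a by auto
    ultimately show ?thesis using card_B Suc.prems(2) Suc.hyps(2)
      by (simp add: card_Diff_singleton)
  qed
qed

lemma tree_arrow_is_bridge:
  assumes "finite B" "finite V" "\<forall>a\<in>B. s a \<in> V \<and> t a \<in> V"
    and conn: "\<forall>x\<in>V. \<forall>y\<in>V. (x, y) \<in> (edges_of B s t)\<^sup>*"
    and tree: "card V = card B + 1" and a: "a \<in> B"
  shows "(s a, t a) \<notin> (edges_of (B - {a}) s t)\<^sup>*"
proof
  assume redundant: "(s a, t a) \<in> (edges_of (B - {a}) s t)\<^sup>*"
  have "\<forall>x\<in>V. \<forall>y\<in>V. (x, y) \<in> (edges_of (B - {a}) s t)\<^sup>*"
    using edges_of_rtrancl_remove[OF redundant] conn by simp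
  then have "card V \<le> card (B - {a}) + 1"
    using card_le_Suc_card_if_connected[of "B - {a}" V s t] assms(1-3) by blast
  moreover have "card B > 0" using assms(1) a card_gt_0_iff by blast
  ultimately show False using assms(1) tree a by (simp add: card_Diff_singleton)
qed

lemma exists_sign_separating_fibres:
  assumes fin: "finite A" and fibres: "\<And>x. card {a\<in>A. g a = x} \<le> 2"
  shows "\<exists>\<epsilon>::'a \<Rightarrow> int. (\<forall>a. \<epsilon> a \<in> {1, -1}) \<and>
           (\<forall>a\<in>A. \<forall>b\<in>A. a \<noteq> b \<and> g a = g b \<longrightarrow> \<epsilon> a = - \<epsilon> b)"
proof -
  obtain h :: "'a \<Rightarrow> nat" where h: "inj_on h A" using fin finite_imp_inj_to_nat_seg by blast
  define \<epsilon> where "\<epsilon> a = (if \<exists>b\<in>A. b \<noteq> a \<and> g b = g a \<and> h b < h a then -1 else (1::int))" for a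
  have later_first: "\<epsilon> x = -1 \<and> \<epsilon> y = 1"
    if xy: "x \<in> A" "y \<in> A" "x \<noteq> y" "g x = g y" "h y < h x" for x y
  proof -
    have "\<epsilon> y = 1"
    proof (rule ccontr)
      assume "\<epsilon> y \<noteq> 1"
      then obtain c where c: "c \<in> A" "c \<noteq> y" "g c = g y" "h c < h y"
        unfolding \<epsilon>_def by (auto split: if_splits)
      moreover have "c \<noteq> x" using c xy by auto
      ultimately have "{x, y, c} \<subseteq> {a\<in>A. g a = g y}" "card {x, y, c} = 3"
        using xy by auto
      then show False using card_mono[of "{a\<in>A. g a = g y}" "{x, y, c}"] fibres[of "g y"] fin
        by simp
    qed
    then show ?thesis using xy unfolding \<epsilon>_def by auto
  qed
  have "\<epsilon> a = - \<epsilon> b" if "a \<in> A" "b \<in> A" "a \<noteq> b" "g a = g b" for a b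
    using later_first[of a b] later_first[of b a] that h unfolding inj_on_def
    by (cases "h a < h b") (auto, metis linorder_neqE_nat)
  moreover have "\<epsilon> a \<in> {1, -1}" for a unfolding \<epsilon>_def by auto
  ultimately show ?thesis by blast
qed

lemma card_le_1_eq:
  assumes "finite S" "card S \<le> 1" "a \<in> S" "b \<in> S" shows "a = b"
  using assms by (metis One_nat_def card_le_Suc0_iff_eq)

text \<open>Choose \<sigma> separating the arrows with a common source. At a vertex where some arrow
  a starts, \<tau> is then forced on the arrows ending there by the condition relating R to the
  signs; elsewhere it is chosen to separate the arrows with a common target.\<close>

lemma valid_signs_exist:
  fixes A :: "'a set" and s t :: "'a \<Rightarrow> 'v"
  assumes g: "gentle V A s t R"
  shows "\<exists>\<sigma> \<tau>. valid_signs A s t R \<sigma> \<tau>"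
proof -
  have fin: "finite A" and RA: "\<And>a b. (a,b) \<in> R \<Longrightarrow> a \<in> A \<and> b \<in> A \<and> s a = t b"
    using g unfolding gentle_def by auto
  have fibre_bound: "card {a\<in>A. g a = x} \<le> 2" if "g = s \<or> g = t" for g x
  proof (cases "x \<in> V")
    case False
    then have "{a\<in>A. g a = x} = {}" using g that unfolding gentle_def by auto
    then show ?thesis by (metis card.empty zero_le)
  qed (use g that in \<open>auto simp: gentle_def\<close>)
  obtain \<sigma> :: "'a \<Rightarrow> int" where \<sigma>: "\<And>a. \<sigma> a \<in> {1, -1}"
    and \<sigma>_sep: "\<And>a b. a \<in> A \<Longrightarrow> b \<in> A \<Longrightarrow> a \<noteq> b \<Longrightarrow> s a = s b \<Longrightarrow> \<sigma> a = - \<sigma> b"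
    using exists_sign_separating_fibres[OF fin fibre_bound[of s]] by blast
  obtain \<epsilon> :: "'a \<Rightarrow> int" where \<epsilon>: "\<And>a. \<epsilon> a \<in> {1, -1}"
    and \<epsilon>_sep: "\<And>a b. a \<in> A \<Longrightarrow> b \<in> A \<Longrightarrow> a \<noteq> b \<Longrightarrow> t a = t b \<Longrightarrow> \<epsilon> a = - \<epsilon> b"
    using exists_sign_separating_fibres[OF fin fibre_bound[of t]] by blast
  define succ where "succ b = (SOME a. a \<in> A \<and> s a = t b)" for b
  define \<tau> where "\<tau> b = (if \<exists>a\<in>A. s a = t b
      then (if (succ b, b) \<in> R then \<sigma> (succ b) else - \<sigma> (succ b)) else \<epsilon> b)" for b
  have succ: "succ b \<in> A \<and> s (succ b) = t b" if "\<exists>a\<in>A. s a = t b" for b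
    unfolding succ_def by (rule someI_ex) (use that in auto)
  have R_differs_left: "((a,b) \<in> R) \<noteq> ((a',b) \<in> R)"
    if "a \<in> A" "a' \<in> A" "b \<in> A" "a \<noteq> a'" "s a = t b" "s a' = t b" for a a' b
  proof
    assume eq: "((a,b) \<in> R) = ((a',b) \<in> R)"
    have "finite {c. (c,b) \<in> R}" by (rule finite_subset[OF _ fin]) (use RA in auto)
    moreover have "finite {c\<in>A. s c = t b \<and> (c,b) \<notin> R}" using fin by auto
    ultimately show False
      using card_le_1_eq[of "{c. (c,b) \<in> R}" a a']
        card_le_1_eq[of "{c\<in>A. s c = t b \<and> (c,b) \<notin> R}" a a']
        g eq that unfolding gentle_def by (cases "(a,b) \<in> R") auto
  qed
  have R_differs_right: "((a,b) \<in> R) \<noteq> ((a,b') \<in> R)"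
    if "a \<in> A" "b' \<in> A" "b \<in> A" "b \<noteq> b'" "s a = t b" "s a = t b'" for a b b'
  proof
    assume eq: "((a,b) \<in> R) = ((a,b') \<in> R)"
    have "finite {c. (a,c) \<in> R}" by (rule finite_subset[OF _ fin]) (use RA in auto)
    moreover have "finite {c\<in>A. t c = s a \<and> (a,c) \<notin> R}" using fin by auto
    ultimately show False
      using card_le_1_eq[of "{c. (a,c) \<in> R}" b b']
        card_le_1_eq[of "{c\<in>A. t c = s a \<and> (a,c) \<notin> R}" b b']
        g eq that unfolding gentle_def by (cases "(a,b) \<in> R") auto
  qed
  have \<tau>_sep: "\<tau> a = - \<tau> b" if "a \<in> A" "b \<in> A" "a \<noteq> b" "t a = t b" for a b
  proof (cases "\<exists>c\<in>A. s c = t b")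
    case True
    have "succ a = succ b" unfolding succ_def using that by simp
    moreover have "((succ b, a) \<in> R) \<noteq> ((succ b, b) \<in> R)"
      using R_differs_right[of "succ b" b a] succ[OF True] that by auto
    ultimately show ?thesis unfolding \<tau>_def using True that \<sigma>[of "succ b"] by auto
  next
    case False
    then show ?thesis unfolding \<tau>_def using \<epsilon>_sep[OF that] that by auto
  qed
  have R_iff: "((a,b) \<in> R) = (\<sigma> a = \<tau> b)" if "a \<in> A" "b \<in> A" "s a = t b" for a b
  proof -
    have ex: "\<exists>c\<in>A. s c = t b" using that by auto
    show ?thesis
    proof (cases "a = succ b")
      case True then show ?thesis unfolding \<tau>_def using ex \<sigma>[of a] by auto
    next
      case False
      then have "\<sigma> a = - \<sigma> (succ b)" "((a,b) \<in> R) \<noteq> ((succ b,b) \<in> R)"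
        using \<sigma>_sep[of a "succ b"] R_differs_left[of a "succ b" b] succ[OF ex] that by auto
      then show ?thesis unfolding \<tau>_def using ex \<sigma>[of a] \<sigma>[of "succ b"] by auto
    qed
  qed
  have "\<tau> b \<in> {1, -1}" for b using \<sigma>[of "succ b"] \<epsilon>[of b] unfolding \<tau>_def by auto
  then have "valid_signs A s t R \<sigma> \<tau>"
    unfolding valid_signs_def using \<sigma> \<sigma>_sep \<tau>_sep R_iff by blast
  then show ?thesis by blast
qed

text \<open>The Boolean b selects antipaths (True) or permitted paths (False): by valid_signs, arrows
  a, a' with s a = t a' follow each other in such a path iff \<sigma> a = sign_of b * \<tau> a'.\<close>

definition sign_of :: "bool \<Rightarrow> int" where "sign_of b = (if b then 1 else -1)"

lemma sign_of_mult_cancel[simp]: "sign_of b * (sign_of b * x) = x"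
  and sign_of_simps[simp]: "sign_of True = 1" "sign_of False = -1"
  unfolding sign_of_def by simp_all

fun tau_walk :: "bool \<Rightarrow> ('a \<Rightarrow> int) \<Rightarrow> ('v,'a) qpath \<Rightarrow> int" where
  "tau_walk b \<tau> (Triv x e) = sign_of b * e" | "tau_walk b \<tau> (Arr l) = \<tau> (hd l)"

lemma sig_perm_eq_sig_anti: "sig_perm \<sigma> w = sig_anti \<sigma> w"
  and tau_anti_eq_tau_walk: "tau_anti \<tau> w = tau_walk True \<tau> w"
  and tau_perm_eq_tau_walk: "tau_perm \<tau> w = tau_walk False \<tau> w"
  by (cases w; simp)+

definition flip :: "'v \<times> int \<Rightarrow> 'v \<times> int" where "flip c = (fst c, - snd c)"

locale gentle_signs =
  fixes V :: "'v set" and A :: "'a set" and s t :: "'a \<Rightarrow> 'v" and R :: "('a \<times> 'a) set"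
    and \<sigma> \<tau> :: "'a \<Rightarrow> int"
  assumes gentle: "gentle V A s t R" and signs: "valid_signs A s t R \<sigma> \<tau>"
begin

abbreviation "\<N> \<equiv> maxanti V A s t R \<sigma> \<tau>"
abbreviation "\<M> \<equiv> maxperm V A s t R \<sigma> \<tau>"
abbreviation "\<C> \<equiv> ag_C V A s t R \<sigma> \<tau>"
abbreviation "\<Phi> \<equiv> ag_Phi V A s t R \<sigma> \<tau>"
abbreviation "\<Psi> \<equiv> ag_Psi V A s t R \<sigma> \<tau>"

lemma finite_V: "finite V" and finite_A: "finite A"
  and arrow_ends_in_V: "\<And>a. a \<in> A \<Longrightarrow> s a \<in> V \<and> t a \<in> V"
  and connected: "\<forall>x\<in>V. \<forall>y\<in>V. (x, y) \<in> (edges_of A s t)\<^sup>*"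
  using gentle unfolding gentle_def edges_of_def by auto

lemma card_V_le: "card V \<le> card A + 1"
  using card_le_Suc_card_if_connected[OF finite_A finite_V] arrow_ends_in_V connected by blast

lemma sigma_sign: "a \<in> A \<Longrightarrow> \<sigma> a \<in> {1,-1}" and tau_sign: "a \<in> A \<Longrightarrow> \<tau> a \<in> {1,-1}"
  using signs unfolding valid_signs_def by auto

lemma arrow_eq_if_same_source_port:
  assumes "a \<in> A" "b \<in> A" "s a = s b" "\<sigma> a = \<sigma> b" shows "a = b"
proof (rule ccontr)
  assume "a \<noteq> b"
  then have "\<sigma> a = - \<sigma> b" using signs assms unfolding valid_signs_def by blast
  then show False using sigma_sign[OF assms(2)] assms(4) by auto
qed

lemma arrow_eq_if_same_target_port:
  assumes "a \<in> A" "b \<in> A" "t a = t b" "\<tau> a = \<tau> b" shows "a = b"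
proof (rule ccontr)
  assume "a \<noteq> b"
  then have "\<tau> a = - \<tau> b" using signs assms unfolding valid_signs_def by blast
  then show False using tau_sign[OF assms(2)] assms(4) by auto
qed

lemma R_iff_signs: "a \<in> A \<Longrightarrow> b \<in> A \<Longrightarrow> s a = t b \<Longrightarrow> ((a,b) \<in> R) = (\<sigma> a = \<tau> b)"
  using signs unfolding valid_signs_def by blast

definition "ports = V \<times> {1, -1::int}"
definition "out_ports = (\<lambda>a. (s a, \<sigma> a)) ` A"
definition "arrow_at c = (THE a. a \<in> A \<and> (s a, \<sigma> a) = c)"
definition "step b c = (t (arrow_at c), sign_of b * \<tau> (arrow_at c))"

lemma arrow_at_out_port[simp]: "a \<in> A \<Longrightarrow> arrow_at (s a, \<sigma> a) = a"
  unfolding arrow_at_def by (rule the_equality) (auto intro: arrow_eq_if_same_source_port)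

lemma arrow_at: "c \<in> out_ports \<Longrightarrow> arrow_at c \<in> A \<and> (s (arrow_at c), \<sigma> (arrow_at c)) = c"
  unfolding out_ports_def by auto

lemma out_ports_iff: "c \<in> out_ports \<longleftrightarrow> (\<exists>a\<in>A. s a = fst c \<and> \<sigma> a = snd c)"
  unfolding out_ports_def by force

lemma step_out_port[simp]: "a \<in> A \<Longrightarrow> step b (s a, \<sigma> a) = (t a, sign_of b * \<tau> a)"
  unfolding step_def by simp

lemma fst_step[simp]: "fst (step b d) = t (arrow_at d)"
  and snd_step[simp]: "snd (step b d) = sign_of b * \<tau> (arrow_at d)"
  unfolding step_def by simp_all

lemma finite_ports: "finite ports" unfolding ports_def using finite_V by simp

lemma card_ports: "card ports = 2 * card V"
  unfolding ports_def using finite_V by (simp add: card_cartesian_product)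

lemma card_out_ports: "card out_ports = card A"
proof -
  have "inj_on (\<lambda>a. (s a, \<sigma> a)) A" by (rule inj_onI) (auto intro: arrow_eq_if_same_source_port)
  then show ?thesis unfolding out_ports_def by (simp add: card_image)
qed

lemma out_ports_subset: "out_ports \<subseteq> ports"
  unfolding out_ports_def ports_def using arrow_ends_in_V sigma_sign by auto

lemma step_into_ports: "step b ` out_ports \<subseteq> ports"
proof
  fix y assume "y \<in> step b ` out_ports"
  then obtain a where a: "a \<in> A" "y = step b (s a, \<sigma> a)" unfolding out_ports_def by auto
  have "\<tau> a = 1 \<or> \<tau> a = -1" using tau_sign[OF a(1)] by simp
  then show "y \<in> ports" using a arrow_ends_in_V[OF a(1)] unfolding ports_def by (cases b) auto
qed

lemma inj_on_step: "inj_on (step b) out_ports"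
proof (rule inj_onI)
  fix c c' assume c: "c \<in> out_ports" "c' \<in> out_ports" "step b c = step b c'"
  then have "t (arrow_at c) = t (arrow_at c')" "\<tau> (arrow_at c) = \<tau> (arrow_at c')"
    unfolding step_def sign_of_def by (auto split: if_splits)
  then have "arrow_at c = arrow_at c'" using arrow_eq_if_same_target_port arrow_at c by blast
  then show "c = c'" using arrow_at c by metis
qed

sublocale port: partial_injection ports out_ports "step b" for b
  by unfold_locales (auto simp: finite_ports out_ports_subset step_into_ports inj_on_step)

lemma port_starts_iff:
  "c \<in> port.starts b \<longleftrightarrow> c \<in> ports \<and> \<not> (\<exists>a\<in>A. t a = fst c \<and> \<tau> a = sign_of b * snd c)"
proof -
  have "c \<in> step b ` out_ports \<longleftrightarrow> (\<exists>a\<in>A. t a = fst c \<and> \<tau> a = sign_of b * snd c)"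
  proof
    assume "c \<in> step b ` out_ports"
    then obtain a where a: "a \<in> A" "c = step b (s a, \<sigma> a)" unfolding out_ports_def by auto
    then show "\<exists>a\<in>A. t a = fst c \<and> \<tau> a = sign_of b * snd c" by auto
  next
    assume "\<exists>a\<in>A. t a = fst c \<and> \<tau> a = sign_of b * snd c"
    then obtain a where a: "a \<in> A" "t a = fst c" "\<tau> a = sign_of b * snd c" by blast
    then have "step b (s a, \<sigma> a) = c" by (cases c) simp
    moreover have "(s a, \<sigma> a) \<in> out_ports" unfolding out_ports_def using a(1) by (rule imageI)
    ultimately show "c \<in> step b ` out_ports" by (metis imageI)
  qed
  then show ?thesis unfolding port.starts_def by blast
qed

lemma port_starts_subset: "port.starts b \<subseteq> ports"
  unfolding port.starts_def by blast

lemma finite_port_starts: "finite (port.starts b)"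
  using finite_subset[OF port_starts_subset finite_ports] .

lemma card_port_starts: "card (port.starts b) + card A = 2 * card V"
proof -
  have "card (step b ` out_ports) = card A"
    using card_out_ports inj_on_step by (simp add: card_image)
  moreover have "card (ports - step b ` out_ports) = card ports - card (step b ` out_ports)"
    using finite_ports step_into_ports by (meson card_Diff_subset finite_subset)
  moreover have "card (step b ` out_ports) \<le> card ports"
    using step_into_ports finite_ports by (simp add: card_mono)
  ultimately show ?thesis using card_ports unfolding port.starts_def by simp
qed

lemma flip_port_starts:
  assumes "c \<in> port.starts True" shows "flip c \<in> port.starts False"
  using assms port_starts_iff[of c] port_starts_iff[of "flip c"] by (auto simp: ports_def flip_def)

lemma run_end_out_of_domain:
  assumes "p \<in> port.starts b" shows "port.run_end b p \<in> ports" "port.run_end b p \<notin> out_ports"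
  using port.run_end_in_X[OF assms] port.run_length(1)[OF assms] port.run_end_def by auto

lemma run_start_of_end:
  assumes "e \<in> ports" "e \<notin> out_ports"
  shows "port.run_start b e \<in> port.starts b" "port.run_end b (port.run_start b e) = e"
  using port.run_start(1)[OF assms(1) port.not_periodic_if_notin_D[OF assms(2)]]
    port.run_end_run_start[OF assms] by auto

text \<open>Paths list their arrows from the end backwards, hence the rev.\<close>

definition "walk b c = (if port.run_length b c = 0 then Triv (fst c) (snd c)
    else Arr (rev (map (\<lambda>i. arrow_at ((step b ^^ i) c)) [0..<port.run_length b c])))"

definition "is_walk b w = (case w of
      Triv x e \<Rightarrow> x \<in> V \<and> e \<in> {1,-1}
    | Arr l \<Rightarrow> is_qpath A s t l \<and> (\<forall>i. Suc i < length l \<longrightarrow> \<sigma> (l!i) = sign_of b * \<tau> (l ! Suc i)))"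

definition "max_walks b = {w. is_walk b w
    \<and> \<not> (\<exists>a\<in>A. s a = ptgt t w \<and> \<sigma> a = sign_of b * tau_walk b \<tau> w)
    \<and> \<not> (\<exists>c\<in>A. t c = psrc s w \<and> \<tau> c = sign_of b * sig_anti \<sigma> w)}"

lemma arrow_at_funpow:
  assumes "c \<in> port.starts b" "m < port.run_length b c"
  shows "arrow_at ((step b ^^ m) c) \<in> A"
    "s (arrow_at ((step b ^^ m) c)) = fst ((step b ^^ m) c)"
    "\<sigma> (arrow_at ((step b ^^ m) c)) = snd ((step b ^^ m) c)"
  using arrow_at[OF port.run_length(2)[OF assms]] by (auto simp: prod_eq_iff)

lemma walk_Arr:
  "port.run_length b c \<noteq> 0 \<Longrightarrow>
    walk b c = Arr (rev (map (\<lambda>i. arrow_at ((step b ^^ i) c)) [0..<port.run_length b c]))"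
  and walk_Triv: "port.run_length b c = 0 \<Longrightarrow> walk b c = Triv (fst c) (snd c)"
  and plen_walk: "plen (walk b c) = port.run_length b c"
  unfolding walk_def by simp_all

lemma walk_source:
  assumes c: "c \<in> port.starts b"
  shows "psrc s (walk b c) = fst c" "sig_anti \<sigma> (walk b c) = snd c"
proof -
  have "psrc s (walk b c) = fst c \<and> sig_anti \<sigma> (walk b c) = snd c"
  proof (cases "port.run_length b c = 0")
    case False
    then have "last (rev (map (\<lambda>i. arrow_at ((step b ^^ i) c)) [0..<port.run_length b c]))
        = arrow_at c"
      by (simp add: last_rev hd_map)
    then show ?thesis using arrow_at_funpow[OF c, of 0] False by (simp add: walk_Arr)
  qed (simp add: walk_Triv)
  then show "psrc s (walk b c) = fst c" "sig_anti \<sigma> (walk b c) = snd c" by auto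
qed

lemma walk_target:
  assumes c: "c \<in> port.starts b"
  shows "ptgt t (walk b c) = fst (port.run_end b c)"
    "tau_walk b \<tau> (walk b c) = sign_of b * snd (port.run_end b c)"
proof -
  have "ptgt t (walk b c) = fst (port.run_end b c)
      \<and> tau_walk b \<tau> (walk b c) = sign_of b * snd (port.run_end b c)"
  proof (cases "port.run_length b c")
    case (Suc k)
    then have "hd (rev (map (\<lambda>i. arrow_at ((step b ^^ i) c)) [0..<port.run_length b c]))
        = arrow_at ((step b ^^ k) c)"
      by (simp add: hd_rev last_map)
    then show ?thesis using Suc by (simp add: walk_Arr port.run_end_def)
  qed (simp add: walk_Triv port.run_end_def)
  then show "ptgt t (walk b c) = fst (port.run_end b c)"
    "tau_walk b \<tau> (walk b c) = sign_of b * snd (port.run_end b c)" by auto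
qed

lemma is_walk_walk:
  assumes c: "c \<in> port.starts b" shows "is_walk b (walk b c)"
proof (cases "port.run_length b c = 0")
  case True
  have "c \<in> ports" using c port_starts_subset by blast
  then show ?thesis unfolding is_walk_def walk_Triv[OF True] ports_def by auto
next
  case False
  define n where "n = port.run_length b c"
  define xs where "xs = map (\<lambda>i. arrow_at ((step b ^^ i) c)) [0..<n]"
  have len: "length xs = n" unfolding xs_def by simp
  have nth: "\<And>k. k < n \<Longrightarrow> xs ! k = arrow_at ((step b ^^ k) c)" unfolding xs_def by simp
  have "set (rev xs) \<subseteq> A"
    using arrow_at_funpow(1)[OF c] unfolding xs_def n_def by auto
  moreover have
    "s (rev xs ! i) = t (rev xs ! Suc i) \<and> \<sigma> (rev xs ! i) = sign_of b * \<tau> (rev xs ! Suc i)"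
    if i: "Suc i < length (rev xs)" for i
  proof -
    define k where "k = n - Suc (Suc i)"
    have k: "n - Suc i = Suc k" "Suc k < n" using i len unfolding k_def by simp_all
    have "rev xs ! i = arrow_at ((step b ^^ Suc k) c)" "rev xs ! Suc i = arrow_at ((step b ^^ k) c)"
      using i len k unfolding k_def by (simp_all add: rev_nth nth)
    then show ?thesis using arrow_at_funpow[OF c, of "Suc k"] k n_def by simp
  qed
  moreover have "walk b c = Arr (rev xs)" unfolding xs_def n_def by (rule walk_Arr[OF False])
  ultimately show ?thesis using False len unfolding is_walk_def is_qpath_def n_def by auto
qed

lemma walk_in_max_walks:
  assumes c: "c \<in> port.starts b" shows "walk b c \<in> max_walks b"
proof -
  have "\<not> (\<exists>a\<in>A. s a = ptgt t (walk b c) \<and> \<sigma> a = sign_of b * tau_walk b \<tau> (walk b c))"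
    using walk_target[OF c] run_end_out_of_domain(2)[OF c] unfolding out_ports_iff by auto
  moreover have "\<not> (\<exists>a\<in>A. t a = psrc s (walk b c) \<and> \<tau> a = sign_of b * sig_anti \<sigma> (walk b c))"
    using c walk_source[OF c] unfolding port_starts_iff by simp
  ultimately show ?thesis unfolding max_walks_def using is_walk_walk[OF c] by blast
qed

lemma inj_on_walk: "inj_on (walk b) (port.starts b)"
proof (rule inj_onI)
  fix c c' assume "c \<in> port.starts b" "c' \<in> port.starts b" "walk b c = walk b c'"
  then have "fst c = fst c'" "snd c = snd c'" using walk_source by metis+
  then show "c = c'" by (simp add: prod_eq_iff)
qed

lemma is_qpath_nth:
  assumes "is_qpath A s t l" "Suc i < length l"
  shows "l ! i \<in> A" "l ! Suc i \<in> A" "s (l ! i) = t (l ! Suc i)"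
  using assms unfolding is_qpath_def by (auto simp: subset_iff)

lemma step_funpow_along_path:
  assumes l: "is_qpath A s t l"
    and links: "\<And>i. Suc i < length l \<Longrightarrow> \<sigma> (l!i) = sign_of b * \<tau> (l ! Suc i)"
    and i: "i < length l"
  shows "(step b ^^ i) (s (last l), \<sigma> (last l)) = (s (rev l ! i), \<sigma> (rev l ! i))"
  using i
proof (induction i)
  case 0
  have "l \<noteq> []" using l unfolding is_qpath_def by simp
  then show ?case by (simp add: hd_rev[symmetric] hd_conv_nth)
next
  case (Suc i)
  define j where "j = length l - Suc (Suc i)"
  have j: "length l - Suc i = Suc j" "Suc j < length l" using Suc.prems unfolding j_def by simp_all
  have "rev l ! Suc i = l ! j" "rev l ! i = l ! Suc j"
    using Suc.prems j unfolding j_def by (simp_all add: rev_nth)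
  then show ?case using Suc is_qpath_nth[OF l j(2)] links[OF j(2)] by simp
qed

lemma max_walk_is_walk:
  assumes w: "w \<in> max_walks b" shows "\<exists>c\<in>port.starts b. w = walk b c"
proof (cases w)
  case (Triv x e)
  have "x \<in> V" "e \<in> {1,-1}" "\<not> (\<exists>a\<in>A. t a = x \<and> \<tau> a = sign_of b * e)"
    and not_out: "(x,e) \<notin> out_ports"
    using w unfolding max_walks_def is_walk_def out_ports_iff Triv by auto
  then have "(x,e) \<in> port.starts b" using port_starts_iff[of "(x,e)" b] by (auto simp: ports_def)
  moreover have "port.run_length b (x,e) = 0" unfolding port.run_length_def
    by (rule Least_equality) (use not_out in auto)
  ultimately show ?thesis unfolding Triv using walk_Triv[of b "(x,e)"] by (intro bexI) auto
next
  case (Arr l)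
  have qp: "is_qpath A s t l"
    and links: "\<And>i. Suc i < length l \<Longrightarrow> \<sigma> (l!i) = sign_of b * \<tau> (l ! Suc i)"
    and max_end: "\<not> (\<exists>a\<in>A. s a = t (hd l) \<and> \<sigma> a = sign_of b * \<tau> (hd l))"
    and max_start: "\<not> (\<exists>a\<in>A. t a = s (last l) \<and> \<tau> a = sign_of b * \<sigma> (last l))"
    using w unfolding max_walks_def is_walk_def Arr by auto
  have ne: "l \<noteq> []" and set_l: "set l \<subseteq> A" using qp unfolding is_qpath_def by auto
  define c where "c = (s (last l), \<sigma> (last l))"
  have rev_A: "\<And>i. i < length l \<Longrightarrow> rev l ! i \<in> A"
    using set_l by (metis length_rev nth_mem set_rev subsetD)
  note along = step_funpow_along_path[OF qp links, folded c_def]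
  have "\<And>i. i < length l \<Longrightarrow> (step b ^^ i) c \<in> out_ports"
    using along rev_A unfolding out_ports_def by auto
  moreover have "(step b ^^ length l) c \<notin> out_ports"
  proof -
    obtain k where k: "length l = Suc k" using ne by (cases l) auto
    have "rev l ! k = hd l" using ne k by (simp add: rev_nth hd_conv_nth)
    then have "(step b ^^ length l) c = (t (hd l), sign_of b * \<tau> (hd l))"
      using along[of k] k ne set_l by (simp add: hd_in_set subsetD)
    then show ?thesis unfolding out_ports_iff using max_end by auto
  qed
  ultimately have length: "port.run_length b c = length l" unfolding port.run_length_def
    by (intro Least_equality) (auto simp flip: not_less)
  have last_A: "last l \<in> A" using ne set_l by auto
  have start: "c \<in> port.starts b"
    using port_starts_iff[of c b] max_start arrow_ends_in_V[OF last_A] sigma_sign[OF last_A]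
    by (auto simp: ports_def c_def)
  have "map (\<lambda>i. arrow_at ((step b ^^ i) c)) [0..<length l] = rev l"
    by (rule nth_equalityI) (auto simp: along rev_A)
  then have "walk b c = w" unfolding Arr using walk_Arr length ne by simp
  then show ?thesis using start by metis
qed

lemma max_walks_eq: "max_walks b = walk b ` port.starts b"
  using max_walk_is_walk walk_in_max_walks by blast

lemma antipath_links_iff:
  assumes "is_qpath A s t l"
  shows "(\<forall>i. Suc i < length l \<longrightarrow> (l!i, l!Suc i) \<in> R) \<longleftrightarrow>
         (\<forall>i. Suc i < length l \<longrightarrow> \<sigma> (l!i) = sign_of True * \<tau> (l!Suc i))"
  using R_iff_signs is_qpath_nth[OF assms] by simp

lemma permitted_links_iff:
  assumes l: "is_qpath A s t l"
  shows "(\<forall>i. Suc i < length l \<longrightarrow> (l!i, l!Suc i) \<notin> R) \<longleftrightarrow>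
         (\<forall>i. Suc i < length l \<longrightarrow> \<sigma> (l!i) = sign_of False * \<tau> (l!Suc i))"
proof -
  have "((l!i, l!Suc i) \<notin> R) = (\<sigma> (l!i) = - \<tau> (l!Suc i))" if "Suc i < length l" for i
    using R_iff_signs sigma_sign tau_sign is_qpath_nth[OF l that] by fastforce
  then show ?thesis by simp
qed

lemma maxanti_eq_walks: "\<N> = walk True ` port.starts True"
proof -
  have "w \<in> \<N> \<longleftrightarrow> w \<in> max_walks True" for w
  proof (cases w)
    case (Arr l)
    then show ?thesis using antipath_links_iff
      unfolding maxanti_def max_walks_def antipath_def is_walk_def by auto
  qed (simp add: maxanti_def max_walks_def antipath_def is_walk_def)
  then show ?thesis using max_walks_eq by blast
qed

lemma maxperm_eq_walks: "\<M> = walk False ` port.starts False"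
proof -
  have "w \<in> \<M> \<longleftrightarrow> w \<in> max_walks False" for w
  proof (cases w)
    case (Arr l)
    then show ?thesis using permitted_links_iff
      unfolding maxperm_def max_walks_def permitted_def is_walk_def by auto
  qed (simp add: maxperm_def max_walks_def permitted_def is_walk_def)
  then show ?thesis using max_walks_eq by blast
qed

lemma ag_psi_walk:
  assumes a: "a \<in> port.starts True"
  shows "ag_psi V A s t R \<sigma> \<tau> (walk True a) = walk False (flip a)"
  unfolding ag_psi_def
proof (rule the_equality)
  show "walk False (flip a) \<in> \<M> \<and> psrc s (walk False (flip a)) = psrc s (walk True a) \<and>
      sig_perm \<sigma> (walk False (flip a)) = - sig_anti \<sigma> (walk True a)"
    using maxperm_eq_walks flip_port_starts[OF a] walk_source[OF a]
      walk_source[OF flip_port_starts[OF a]]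
    by (simp add: sig_perm_eq_sig_anti flip_def)
next
  fix w
  assume w: "w \<in> \<M> \<and> psrc s w = psrc s (walk True a) \<and> sig_perm \<sigma> w = - sig_anti \<sigma> (walk True a)"
  then obtain c where c: "c \<in> port.starts False" "w = walk False c" using maxperm_eq_walks by auto
  have "fst c = fst a" "snd c = - snd a"
    using w walk_source[OF a] walk_source[OF c(1)] c(2) by (simp_all add: sig_perm_eq_sig_anti)
  then have "c = flip a" unfolding flip_def by (simp add: prod_eq_iff)
  then show "w = walk False (flip a)" using c by simp
qed

lemma ag_phi_walk:
  assumes p: "p \<in> port.starts False"
  shows "ag_phi V A s t R \<sigma> \<tau> (walk False p)
    = walk True (port.run_start True (port.run_end False p))"
  unfolding ag_phi_def
proof (rule the_equality)
  let ?e = "port.run_end False p"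
  let ?a = "port.run_start True ?e"
  have a: "?a \<in> port.starts True" "port.run_end True ?a = ?e"
    using run_start_of_end[OF run_end_out_of_domain[OF p]] by auto
  show "walk True ?a \<in> \<N> \<and> ptgt t (walk True ?a) = ptgt t (walk False p) \<and>
        tau_anti \<tau> (walk True ?a) = - tau_perm \<tau> (walk False p)"
    using maxanti_eq_walks a walk_target[OF a(1)] walk_target[OF p]
    by (simp add: tau_anti_eq_tau_walk tau_perm_eq_tau_walk)
  fix w
  assume w: "w \<in> \<N> \<and> ptgt t w = ptgt t (walk False p) \<and> tau_anti \<tau> w = - tau_perm \<tau> (walk False p)"
  then obtain c where c: "c \<in> port.starts True" "w = walk True c" using maxanti_eq_walks by auto
  have "fst (port.run_end True c) = fst ?e" "snd (port.run_end True c) = snd ?e"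
    using w walk_target[OF c(1)] walk_target[OF p] c(2)
    by (simp_all add: tau_anti_eq_tau_walk tau_perm_eq_tau_walk)
  then have "port.run_end True c = port.run_end True ?a" using a by (simp add: prod_eq_iff)
  then have "c = ?a" using port.run_end_inj[OF c(1) a(1)] by simp
  then show "w = walk True ?a" using c by simp
qed

text \<open>The map \<Phi> on maximal antipaths, transported to their start ports.\<close>

definition "Phi_port a = port.run_start True (port.run_end False (flip a))"

lemma Phi_port_closed: "Phi_port ` port.starts True \<subseteq> port.starts True"
  unfolding Phi_port_def using run_start_of_end run_end_out_of_domain flip_port_starts by blast

lemma ag_Phi_walk: "a \<in> port.starts True \<Longrightarrow> \<Phi> (walk True a) = walk True (Phi_port a)"
  unfolding ag_Phi_def Phi_port_def by (simp add: ag_psi_walk ag_phi_walk flip_port_starts)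

lemma ag_Phi_funpow_walk:
  "a \<in> port.starts True \<Longrightarrow> (\<Phi> ^^ n) (walk True a) = walk True ((Phi_port ^^ n) a)"
proof (induction n)
  case (Suc n)
  then show ?case using funpow_closed[OF Phi_port_closed Suc.prems] ag_Phi_walk by simp
qed simp

lemma inj_on_Phi_port: "inj_on Phi_port (port.starts True)"
proof (rule inj_onI)
  fix a a' assume a: "a \<in> port.starts True" "a' \<in> port.starts True" "Phi_port a = Phi_port a'"
  have "port.run_end False (flip a) = port.run_end False (flip a')"
    using run_start_of_end(2)[OF run_end_out_of_domain[OF flip_port_starts[OF a(1)]], of True]
      run_start_of_end(2)[OF run_end_out_of_domain[OF flip_port_starts[OF a(2)]], of True] a(3)
    unfolding Phi_port_def by metis
  then have "flip a = flip a'" using port.run_end_inj flip_port_starts a by blast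
  then show "a = a'" unfolding flip_def by (simp add: prod_eq_iff)
qed

lemma card_maxanti: "card \<N> = card (port.starts True)"
  using maxanti_eq_walks inj_on_walk by (simp add: card_image)

lemma finite_maxanti: "finite \<N>"
  using maxanti_eq_walks finite_port_starts by simp

lemma ag_Phi_closed: "\<Phi> ` \<N> \<subseteq> \<N>"
  using maxanti_eq_walks ag_Phi_walk Phi_port_closed by auto

fun arrows_of :: "('v,'a) qpath \<Rightarrow> 'a set" where
  "arrows_of (Triv x e) = {}" | "arrows_of (Arr l) = set l"

lemma finite_arrows_of: "finite (arrows_of w)"
  and card_arrows_of_le: "card (arrows_of w) \<le> plen w"
  by (cases w; simp add: card_length)+

lemma card_le_sum_plen_if_ag_C_empty:
  assumes "\<C> = {}" shows "card A \<le> (\<Sum>w\<in>\<N>. plen w)"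
proof -
  have "A \<subseteq> (\<Union>w\<in>\<N>. arrows_of w)"
  proof
    fix a assume a: "a \<in> A"
    then obtain w where w: "w \<in> \<N>" "\<not> (case w of Triv x e \<Rightarrow> True | Arr l \<Rightarrow> a \<notin> set l)"
      using assms unfolding ag_C_def by blast
    then have "a \<in> arrows_of w" by (cases w) auto
    then show "a \<in> (\<Union>w\<in>\<N>. arrows_of w)" using w(1) by blast
  qed
  then have "card A \<le> card (\<Union>w\<in>\<N>. arrows_of w)"
    using finite_maxanti finite_arrows_of by (intro card_mono) simp_all
  also have "\<dots> \<le> (\<Sum>w\<in>\<N>. card (arrows_of w))" using finite_maxanti by (rule card_UN_le)
  also have "\<dots> \<le> (\<Sum>w\<in>\<N>. plen w)" by (rule sum_mono) (rule card_arrows_of_le)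
  finally show ?thesis .
qed

lemma AG_with_char_fun_imp:
  assumes H: "AG_with V A s t R \<sigma> \<tau> = char_fun (p + 2) p"
  shows "\<C> = {}" "card \<N> = p + 2" "(\<Sum>w\<in>\<N>. plen w) = p"
proof -
  have H': "card {Ob \<in> orbits \<Phi> \<N>. card Ob = p' \<and> (\<Sum>w\<in>Ob. plen w) = q'}
     + card {Ob \<in> orbits \<Psi> \<C>. p' = 0 \<and> card Ob = q'} = char_fun (p + 2) p p' q'" for p' q'
    using fun_cong[OF fun_cong[OF H, of p'], of q'] unfolding AG_with_def .
  have fin: "finite (orbits \<Psi> \<C>)" using finite_A unfolding ag_C_def by (simp add: finite_orbits)
  have no_\<Psi>_orbits: "orbits \<Psi> \<C> = {}"
  proof (rule ccontr)
    assume "orbits \<Psi> \<C> \<noteq> {}"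
    then obtain Ob where Ob: "Ob \<in> orbits \<Psi> \<C>" by blast
    have "card {Ob' \<in> orbits \<Psi> \<C>. (0::nat) = 0 \<and> card Ob' = card Ob} > 0"
      by (subst card_gt_0_iff) (use Ob fin in auto)
    then show False using H'[of 0 "card Ob"] unfolding char_fun_def by simp
  qed
  then show "\<C> = {}" unfolding orbits_eq_image_funpow_orbit by simp
  have "card {Ob \<in> orbits \<Phi> \<N>. card Ob = p' \<and> (\<Sum>w\<in>Ob. plen w) = q'} = char_fun (p + 2) p p' q'"
    for p' q' using H'[of p' q'] no_\<Psi>_orbits by simp
  from card_fibres_eq_char_fun_imp[OF finite_orbits[OF finite_maxanti] this]
  obtain Ob where "orbits \<Phi> \<N> = {Ob}" "card Ob = p + 2" "(\<Sum>w\<in>Ob. plen w) = p" by blast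
  moreover have "Ob = \<N>" using orbits_eq_singleton_imp[OF ag_Phi_closed] calculation(1) .
  ultimately show "card \<N> = p + 2" "(\<Sum>w\<in>\<N>. plen w) = p" by simp_all
qed

lemma tree_if_AG_char_fun:
  assumes "AG_with V A s t R \<sigma> \<tau> = char_fun (p + 2) p"
  shows "card V = card A + 1"
proof -
  have "card A \<le> p" using AG_with_char_fun_imp[OF assms] card_le_sum_plen_if_ag_C_empty by simp
  moreover have "p + 2 + card A = 2 * card V"
    using AG_with_char_fun_imp(2)[OF assms] card_maxanti card_port_starts[of True] by simp
  ultimately show ?thesis using card_V_le by simp
qed

lemma edges_of_other_arrow:
  assumes "d \<in> A" "d \<noteq> e"
  shows "(s d, t d) \<in> (edges_of (A - {e}) s t)\<^sup>*" "(t d, s d) \<in> (edges_of (A - {e}) s t)\<^sup>*"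
  using assms unfolding edges_of_def by auto

lemma step_funpow_path:
  assumes "0 < n" "\<forall>m<n. (step b ^^ m) c \<in> out_ports"
    and "\<forall>m. 0 < m \<and> m < n \<longrightarrow> (step b ^^ m) c \<noteq> c"
  shows "(t (arrow_at c), fst ((step b ^^ n) c)) \<in> (edges_of (A - {arrow_at c}) s t)\<^sup>*"
  using assms
proof (induction n)
  case (Suc n)
  show ?case
  proof (cases "n = 0")
    case False
    let ?d = "(step b ^^ n) c"
    have IH: "(t (arrow_at c), fst ?d) \<in> (edges_of (A - {arrow_at c}) s t)\<^sup>*"
      using Suc False by simp
    have d: "?d \<in> out_ports" "?d \<noteq> c" "c \<in> out_ports" using Suc.prems False by auto
    then have "arrow_at ?d \<noteq> arrow_at c" using arrow_at[OF d(1)] arrow_at[OF d(3)] by auto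
    moreover have "fst ?d = s (arrow_at ?d)" "arrow_at ?d \<in> A" using arrow_at[OF d(1)]
      by (metis fst_conv)+
    ultimately show ?thesis
      using IH edges_of_other_arrow(1)[of "arrow_at ?d" "arrow_at c"] by (simp add: rtrancl_trans)
  qed simp
qed simp

end

locale gentle_tree = gentle_signs +
  assumes tree: "card V = card A + 1"
begin

lemma arrow_is_bridge: "a \<in> A \<Longrightarrow> (s a, t a) \<notin> (edges_of (A - {a}) s t)\<^sup>*"
  by (rule tree_arrow_is_bridge[OF finite_A finite_V _ connected tree])
    (use arrow_ends_in_V in auto)

lemma not_periodic: "\<not> port.periodic b c"
proof
  assume "port.periodic b c"
  then have ex: "\<exists>k. k > 0 \<and> (\<forall>m<k. (step b ^^ m) c \<in> out_ports) \<and> (step b ^^ k) c = c"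
    unfolding port.periodic_def by blast
  define k where "k = (LEAST k. k > 0 \<and> (\<forall>m<k. (step b ^^ m) c \<in> out_ports) \<and> (step b ^^ k) c = c)"
  have k: "k > 0" "\<forall>m<k. (step b ^^ m) c \<in> out_ports" "(step b ^^ k) c = c"
    using LeastI_ex[OF ex] unfolding k_def by auto
  have min: "\<forall>m. 0 < m \<and> m < k \<longrightarrow> (step b ^^ m) c \<noteq> c"
  proof (intro allI impI notI)
    fix m assume m: "0 < m \<and> m < k" "(step b ^^ m) c = c"
    have "k \<le> m" unfolding k_def by (rule Least_le) (use m k(2) in auto)
    then show False using m by simp
  qed
  have "c \<in> out_ports" using k(2)[rule_format, of 0] k(1) by simp
  then have e: "arrow_at c \<in> A" "s (arrow_at c) = fst c" using arrow_at by (metis fst_conv)+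
  have "(t (arrow_at c), s (arrow_at c)) \<in> (edges_of (A - {arrow_at c}) s t)\<^sup>*"
    using step_funpow_path[OF k(1,2) min] k(3) e(2) by simp
  then have "(s (arrow_at c), t (arrow_at c)) \<in> (edges_of (A - {arrow_at c}) s t)\<^sup>*"
    by (rule edges_of_rtrancl_sym)
  then show False using arrow_is_bridge[OF e(1)] by contradiction
qed

lemma run_start_tree:
  assumes "c \<in> ports"
  shows "port.run_start b c \<in> port.starts b" "\<exists>k. port.reaches b (port.run_start b c) k c"
  using port.run_start[OF assms not_periodic] by auto

lemma run_start_step: "d \<in> out_ports \<Longrightarrow> port.run_start b (step b d) = port.run_start b d"
  using port.run_start_step[OF _ not_periodic] .

lemma sum_plen_maxanti: "(\<Sum>w\<in>\<N>. plen w) = card A"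
proof -
  have "(\<Sum>w\<in>\<N>. plen w) = (\<Sum>a\<in>port.starts True. plen (walk True a))"
    unfolding maxanti_eq_walks by (rule sum.reindex[OF inj_on_walk, unfolded comp_def])
  also have "\<dots> = card out_ports"
    using port.sum_run_length[OF not_periodic] by (simp add: plen_walk)
  finally show ?thesis using card_out_ports by simp
qed

lemma ag_C_empty: "\<C> = {}"
proof -
  have "a \<notin> \<C>" if a: "a \<in> A" for a
  proof -
    define c where "c = (s a, \<sigma> a)"
    have c: "c \<in> out_ports" "c \<in> ports" unfolding c_def out_ports_def using a out_ports_subset
      by (auto simp: out_ports_def)
    let ?a = "port.run_start True c"
    obtain k where k: "port.reaches True ?a k c" and start: "?a \<in> port.starts True"
      using run_start_tree[OF c(2)] by blast
    have k_less: "k < port.run_length True ?a" using port.reaches_less_run_length[OF start k c(1)] .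
    moreover have "arrow_at ((step True ^^ k) ?a) = a"
      using k a unfolding port.reaches_def c_def by simp
    ultimately have
      "a \<in> set (rev (map (\<lambda>i. arrow_at ((step True ^^ i) ?a)) [0..<port.run_length True ?a]))"
      by force
    moreover have "walk True ?a \<in> \<N>" using maxanti_eq_walks start by simp
    moreover have "port.run_length True ?a \<noteq> 0" using k_less by simp
    ultimately show "a \<notin> \<C>" unfolding ag_C_def using walk_Arr by fastforce
  qed
  then show ?thesis unfolding ag_C_def by auto
qed

abbreviation "Phi_orbit \<equiv> funpow_orbit Phi_port"

lemma Phi_orbit_sym: "a \<in> port.starts True \<Longrightarrow> b \<in> Phi_orbit a \<Longrightarrow> a \<in> Phi_orbit b"
  using funpow_orbit_sym[OF finite_port_starts inj_on_Phi_port Phi_port_closed] .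

end

text \<open>Removing the arrow leaving c0 cuts the tree in two; on_side c says that the vertex of the
  port c lies in the part containing the source of that arrow.\<close>

locale gentle_tree_cut = gentle_tree +
  fixes c0 assumes c0_out_port: "c0 \<in> out_ports"
begin

definition "on_side c \<longleftrightarrow> (s (arrow_at c0), fst c) \<in> (edges_of (A - {arrow_at c0}) s t)\<^sup>*"

lemma c0_port: "c0 \<in> ports" using c0_out_port out_ports_subset by auto

lemma c0_on_side: "on_side c0"
  using arrow_at[OF c0_out_port] unfolding on_side_def by (metis fst_conv rtrancl.rtrancl_refl)

lemma step_c0_off_side: "\<not> on_side (step b c0)"
  using arrow_is_bridge arrow_at[OF c0_out_port] unfolding on_side_def by simp

lemma on_side_step:
  assumes d: "d \<in> out_ports" "d \<noteq> c0" shows "on_side (step b d) \<longleftrightarrow> on_side d"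
proof -
  have "arrow_at d \<in> A" "fst d = s (arrow_at d)" "arrow_at d \<noteq> arrow_at c0"
    using arrow_at[OF d(1)] arrow_at[OF c0_out_port] d by (auto simp: prod_eq_iff)
  then show ?thesis unfolding on_side_def using edges_of_other_arrow rtrancl_trans
    by (metis fst_step)
qed

lemma on_side_funpow:
  assumes "i \<le> m" "\<forall>j. i \<le> j \<and> j < m \<longrightarrow> (step b ^^ j) x \<in> out_ports \<and> (step b ^^ j) x \<noteq> c0"
  shows "on_side ((step b ^^ m) x) \<longleftrightarrow> on_side ((step b ^^ i) x)"
  using assms
proof (induction m)
  case (Suc m)
  show ?case
  proof (cases "i = Suc m")
    case False
    then have "i \<le> m" using Suc.prems by simp
    then show ?thesis using Suc on_side_step[of "(step b ^^ m) x"] by simp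
  qed simp
qed simp

lemma on_side_run_avoiding_c0:
  assumes x: "x \<in> port.starts b" and avoid: "\<forall>j<port.run_length b x. (step b ^^ j) x \<noteq> c0"
    and i: "i \<le> port.run_length b x"
  shows "on_side ((step b ^^ i) x) \<longleftrightarrow> on_side x"
  using on_side_funpow[of 0 i b x] port.run_length(2)[OF x] avoid i by simp

lemma run_avoids_c0_if_ends_on_side:
  assumes x: "x \<in> port.starts b" and end_on_side: "on_side (port.run_end b x)"
  shows "\<forall>j<port.run_length b x. (step b ^^ j) x \<noteq> c0"
proof (intro allI impI notI)
  fix j assume j: "j < port.run_length b x" and c0: "(step b ^^ j) x = c0"
  have "(step b ^^ j') x \<noteq> c0" if "Suc j \<le> j'" "j' < port.run_length b x" for j'
  proof
    assume "(step b ^^ j') x = c0"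
    then have "port.reaches b x j' c0" using that port.run_length(2)[OF x]
      unfolding port.reaches_def by auto
    from port.reaches_first[OF x this, of j] show False using c0 that by simp
  qed
  then have "on_side (port.run_end b x) \<longleftrightarrow> on_side ((step b ^^ Suc j) x)"
    using on_side_funpow[of "Suc j" "port.run_length b x" b x] port.run_length(2)[OF x] j
    unfolding port.run_end_def by simp
  then show False using end_on_side step_c0_off_side c0 by simp
qed

definition "inner_starts =
  {a \<in> port.starts True. \<forall>i\<le>port.run_length True a. on_side ((step True ^^ i) a)}"

lemma run_through_c0_not_inner:
  defines "a0 \<equiv> port.run_start True c0"
  shows "a0 \<in> port.starts True" "on_side a0" "a0 \<notin> inner_starts"
proof -
  obtain k where k: "port.reaches True a0 k c0" and start: "a0 \<in> port.starts True"
    using run_start_tree[OF c0_port] unfolding a0_def by blast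
  then show "a0 \<in> port.starts True" by simp
  have "\<forall>j. 0 \<le> j \<and> j < k \<longrightarrow> (step True ^^ j) a0 \<in> out_ports \<and> (step True ^^ j) a0 \<noteq> c0"
    using port.reaches_before[OF k] port.reaches_first[OF start k] by blast
  then show "on_side a0" using on_side_funpow[of 0 k True a0] k c0_on_side
    unfolding port.reaches_def by simp
  have "Suc k \<le> port.run_length True a0"
    using port.reaches_less_run_length[OF start k c0_out_port] by simp
  moreover have "\<not> on_side ((step True ^^ Suc k) a0)"
    using k step_c0_off_side unfolding port.reaches_def by simp
  ultimately show "a0 \<notin> inner_starts" unfolding inner_starts_def by blast
qed

lemma Phi_port_on_side:
  assumes a: "a \<in> port.starts True" "on_side a"
  shows "Phi_port a = port.run_start True (port.run_end False (port.run_start False c0))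
    \<or> Phi_port a \<in> inner_starts"
proof -
  let ?p = "flip a"
  have p: "?p \<in> port.starts False" using flip_port_starts[OF a(1)] .
  show ?thesis
  proof (cases "\<exists>j < port.run_length False ?p. (step False ^^ j) ?p = c0")
    case True
    then obtain j where "j < port.run_length False ?p" "(step False ^^ j) ?p = c0" by blast
    then have "port.reaches False ?p j c0"
      unfolding port.reaches_def using port.run_length(2)[OF p] by auto
    then have "port.run_start False c0 = ?p" using port.run_start_eqI[OF p] by blast
    then show ?thesis unfolding Phi_port_def by simp
  next
    case False
    let ?e = "port.run_end False ?p"
    let ?b = "port.run_start True ?e"
    have "on_side ((step False ^^ port.run_length False ?p) ?p) \<longleftrightarrow> on_side ?p"
      using on_side_run_avoiding_c0[OF p _ le_refl] False by blast
    moreover have "on_side ?p" using a(2) unfolding on_side_def flip_def by simp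
    ultimately have e: "on_side ?e" unfolding port.run_end_def by simp
    have b: "?b \<in> port.starts True" "port.run_end True ?b = ?e"
      using run_start_of_end[OF run_end_out_of_domain[OF p]] by auto
    then have avoid: "\<forall>j<port.run_length True ?b. (step True ^^ j) ?b \<noteq> c0"
      using run_avoids_c0_if_ends_on_side e by simp
    have same: "on_side ((step True ^^ i) ?b) \<longleftrightarrow> on_side ?b"
      if "i \<le> port.run_length True ?b" for i
      using on_side_run_avoiding_c0[OF b(1) avoid that] .
    then have "on_side ?b" using b(2) e unfolding port.run_end_def by (metis le_refl)
    then have "?b \<in> inner_starts" using b(1) same unfolding inner_starts_def by blast
    then show ?thesis unfolding Phi_port_def by simp
  qed
qed

lemma phi_through_c0_in_Phi_orbit:
  "port.run_start True (port.run_end False (port.run_start False c0))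
    \<in> Phi_orbit (port.run_start True c0)"
proof (rule ccontr)
  let ?a0 = "port.run_start True c0"
  let ?phi = "port.run_start True (port.run_end False (port.run_start False c0))"
  assume not_in: "?phi \<notin> Phi_orbit ?a0"
  have avoid: "(Phi_port ^^ n) ?a0 \<noteq> ?phi" for n
  proof
    assume "(Phi_port ^^ n) ?a0 = ?phi"
    then have "?phi \<in> Phi_orbit ?a0" unfolding funpow_orbit_def by (intro CollectI exI[of _ n]) simp
    then show False using not_in by contradiction
  qed
  have inner: "(Phi_port ^^ Suc n) ?a0 \<in> inner_starts" for n
  proof (induction n)
    case 0
    show ?case using Phi_port_on_side[OF run_through_c0_not_inner(1,2)] avoid[of 1] by simp
  next
    case (Suc n)
    then have "(Phi_port ^^ Suc n) ?a0 \<in> port.starts True" "on_side ((Phi_port ^^ Suc n) ?a0)"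
      unfolding inner_starts_def by (auto dest: spec[of _ 0])
    then show ?case using Phi_port_on_side[of "(Phi_port ^^ Suc n) ?a0"] avoid[of "Suc (Suc n)"]
      by simp
  qed
  obtain K where "K > 0" "(Phi_port ^^ K) ?a0 = ?a0"
    using funpow_returns_if_inj_on_finite[OF finite_port_starts inj_on_Phi_port Phi_port_closed
        run_through_c0_not_inner(1)] by blast
  then show False using inner[of "K - 1"] run_through_c0_not_inner(3) by simp
qed

end

context gentle_tree
begin

abbreviation "anti_start c \<equiv> port.run_start True c"
abbreviation "phi_port p \<equiv> port.run_start True (port.run_end False p)"

lemma phi_perm_start_in_Phi_orbit:
  assumes c: "c \<in> ports" shows "phi_port (port.run_start False c) \<in> Phi_orbit (anti_start c)"
proof (cases "c \<in> out_ports")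
  case True
  interpret gentle_tree_cut V A s t R \<sigma> \<tau> c using True by unfold_locales
  show ?thesis by (rule phi_through_c0_in_Phi_orbit)
next
  case False
  then show ?thesis using run_start_of_end(2)[OF c False] funpow_orbit_refl by simp
qed

lemma anti_start_flip_in_Phi_orbit:
  assumes c: "c \<in> ports" shows "anti_start (flip c) \<in> Phi_orbit (anti_start c)"
proof -
  have flip_c: "flip c \<in> ports" using c unfolding flip_def ports_def by auto
  have flip_back: "anti_start (flip c) \<in> Phi_orbit (phi_port (port.run_start False (flip c)))"
    using Phi_orbit_sym[OF run_start_tree(1)[OF flip_c] phi_perm_start_in_Phi_orbit[OF flip_c]] .
  show ?thesis
  proof (cases "c \<in> port.starts True")
    case True
    have "port.run_start False (flip c) = flip c"
      using port.run_start_of_start[OF flip_port_starts[OF True]] .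
    then have "anti_start (flip c) \<in> Phi_orbit (Phi_port c)"
      using flip_back unfolding Phi_port_def by simp
    moreover have "anti_start c = c" using port.run_start_of_start[OF True] .
    ultimately show ?thesis using funpow_orbit_trans[OF funpow_orbit_step[of Phi_port c]] by simp
  next
    case False
    then obtain d where d: "d \<in> out_ports" "c = step True d"
      using c unfolding port.starts_def by blast
    have "flip c = step False d" using d(2) unfolding flip_def step_def by simp
    then have "anti_start (flip c) \<in> Phi_orbit (phi_port (port.run_start False d))"
      using flip_back run_start_step[OF d(1)] by simp
    moreover have "anti_start c = anti_start d" using run_start_step[OF d(1)] d(2) by simp
    moreover have "d \<in> ports" using d(1) out_ports_subset by auto
    ultimately show ?thesis using funpow_orbit_trans[OF phi_perm_start_in_Phi_orbit] by simp
  qed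
qed

text \<open>Both ports of a vertex, and the ports at both ends of an arrow, start runs in one
  \<Phi>-orbit. By connectedness this orbit contains all maximal antipaths.\<close>

definition "vertex_rep x = anti_start (x, 1)"

lemma vertex_rep_port_starts: "x \<in> V \<Longrightarrow> vertex_rep x \<in> port.starts True"
  unfolding vertex_rep_def by (rule run_start_tree(1)) (simp add: ports_def)

lemma anti_start_in_Phi_orbit_vertex_rep:
  assumes c: "c \<in> ports"
  shows "anti_start c \<in> Phi_orbit (vertex_rep (fst c))"
    and "vertex_rep (fst c) \<in> Phi_orbit (anti_start c)"
proof -
  obtain x e where xe: "c = (x, e)" "x \<in> V" "e = 1 \<or> e = -1" using c unfolding ports_def by auto
  have "anti_start c \<in> Phi_orbit (vertex_rep (fst c))"
  proof (cases "e = 1")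
    case True then show ?thesis using xe funpow_orbit_refl unfolding vertex_rep_def by simp
  next
    case False
    have "(x, 1) \<in> ports" using xe unfolding ports_def by simp
    from anti_start_flip_in_Phi_orbit[OF this] show ?thesis
      using xe False unfolding vertex_rep_def flip_def by simp
  qed
  then show "anti_start c \<in> Phi_orbit (vertex_rep (fst c))"
    and "vertex_rep (fst c) \<in> Phi_orbit (anti_start c)"
    using Phi_orbit_sym[OF vertex_rep_port_starts] xe by auto
qed

lemma vertex_rep_in_Phi_orbit_along_arrow:
  assumes a: "a \<in> A"
  shows "vertex_rep (t a) \<in> Phi_orbit (vertex_rep (s a))"
    "vertex_rep (s a) \<in> Phi_orbit (vertex_rep (t a))"
proof -
  have "(s a, \<sigma> a) \<in> out_ports" unfolding out_ports_def using a by blast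
  then have eq: "anti_start (s a, \<sigma> a) = anti_start (t a, \<tau> a)"
    using run_start_step[of "(s a, \<sigma> a)" True] a by simp
  have c1: "(s a, \<sigma> a) \<in> ports" and c2: "(t a, \<tau> a) \<in> ports"
    using arrow_ends_in_V[OF a] sigma_sign[OF a] tau_sign[OF a] unfolding ports_def by auto
  show "vertex_rep (t a) \<in> Phi_orbit (vertex_rep (s a))"
    using funpow_orbit_trans[OF anti_start_in_Phi_orbit_vertex_rep(1)[OF c1]]
      anti_start_in_Phi_orbit_vertex_rep(2)[OF c2] eq by simp
  show "vertex_rep (s a) \<in> Phi_orbit (vertex_rep (t a))"
    using funpow_orbit_trans[OF anti_start_in_Phi_orbit_vertex_rep(1)[OF c2]]
      anti_start_in_Phi_orbit_vertex_rep(2)[OF c1] eq by simp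
qed

lemma Phi_orbit_eq_port_starts:
  assumes a: "a \<in> port.starts True" shows "Phi_orbit a = port.starts True"
proof -
  obtain x0 where x0: "x0 \<in> V" using gentle unfolding gentle_def by auto
  have path: "vertex_rep y \<in> Phi_orbit (vertex_rep x0)" if "(x0, y) \<in> (edges_of A s t)\<^sup>*" for y
    using that
  proof (induction rule: rtrancl_induct)
    case (step y z)
    then obtain b where "b \<in> A" "(y = s b \<and> z = t b) \<or> (y = t b \<and> z = s b)"
      unfolding edges_of_def by auto
    then have "vertex_rep z \<in> Phi_orbit (vertex_rep y)"
      using vertex_rep_in_Phi_orbit_along_arrow by auto
    then show ?case using funpow_orbit_trans[OF step.IH] by simp
  qed (rule funpow_orbit_refl)
  have all: "b \<in> Phi_orbit (vertex_rep x0)" if b: "b \<in> port.starts True" for b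
  proof -
    have c: "b \<in> ports" using b port_starts_subset by blast
    then have "fst b \<in> V" unfolding ports_def by auto
    then have "vertex_rep (fst b) \<in> Phi_orbit (vertex_rep x0)" using path connected x0 by blast
    from funpow_orbit_trans[OF this anti_start_in_Phi_orbit_vertex_rep(1)[OF c]]
    show ?thesis using port.run_start_of_start[OF b] by simp
  qed
  show ?thesis
  proof
    show "Phi_orbit a \<subseteq> port.starts True" using funpow_orbit_subset[OF Phi_port_closed a] .
    have "vertex_rep x0 \<in> Phi_orbit a"
      using Phi_orbit_sym[OF vertex_rep_port_starts[OF x0] all[OF a]] .
    then show "port.starts True \<subseteq> Phi_orbit a" using funpow_orbit_trans[OF _ all] by blast
  qed
qed

lemma orbits_ag_Phi_maxanti: "orbits \<Phi> \<N> = {\<N>}"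
proof -
  have "funpow_orbit \<Phi> w = \<N>" if w: "w \<in> \<N>" for w
  proof -
    obtain a where a: "a \<in> port.starts True" "w = walk True a" using w maxanti_eq_walks by auto
    have "funpow_orbit \<Phi> w = walk True ` Phi_orbit a"
      unfolding funpow_orbit_def a(2) using ag_Phi_funpow_walk[OF a(1)] by auto
    then show ?thesis using Phi_orbit_eq_port_starts[OF a(1)] maxanti_eq_walks by simp
  qed
  moreover have "\<N> \<noteq> {}" using card_maxanti card_port_starts[of True] tree by auto
  ultimately show ?thesis unfolding orbits_eq_image_funpow_orbit by auto
qed

lemma AG_with_tree: "AG_with V A s t R \<sigma> \<tau> = char_fun (card A + 2) (card A)"
proof (intro ext)
  fix p q
  have "orbits \<Psi> \<C> = {}" using ag_C_empty unfolding orbits_def by simp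
  then have "AG_with V A s t R \<sigma> \<tau> p q = card {Ob \<in> {\<N>}. card Ob = p \<and> (\<Sum>w\<in>Ob. plen w) = q}"
    unfolding AG_with_def orbits_ag_Phi_maxanti by simp
  also have "{Ob \<in> {\<N>}. card Ob = p \<and> (\<Sum>w\<in>Ob. plen w) = q} =
      (if card \<N> = p \<and> (\<Sum>w\<in>\<N>. plen w) = q then {\<N>} else {})" by auto
  also have "card \<dots> = char_fun (card A + 2) (card A) p q"
    unfolding char_fun_def using card_maxanti card_port_starts[of True] tree sum_plen_maxanti
    by auto
  finally show "AG_with V A s t R \<sigma> \<tau> p q = char_fun (card A + 2) (card A) p q" .
qed

end

theorem proposition3p4:
  fixes V :: "'v set" and A :: "'a set" and s t :: "'a \<Rightarrow> 'v" and R :: "('a \<times> 'a) set"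
  assumes "gentle V A s t R"
  shows "card V = card A + 1 \<longleftrightarrow>
         (\<exists>p::nat. AG_invariant V A s t R = char_fun (p + 2) p)"
proof -
  obtain \<sigma> \<tau> where invariant: "AG_invariant V A s t R = AG_with V A s t R \<sigma> \<tau>"
    and valid: "valid_signs A s t R \<sigma> \<tau>"
    using someI_ex[of "\<lambda>st. valid_signs A s t R (fst st) (snd st)"] valid_signs_exist[OF assms]
    unfolding AG_invariant_def Let_def by auto
  interpret gentle_signs V A s t R \<sigma> \<tau> using assms valid by unfold_locales
  show ?thesis
  proof
    assume "card V = card A + 1"
    then interpret gentle_tree V A s t R \<sigma> \<tau> by unfold_locales
    show "\<exists>p. AG_invariant V A s t R = char_fun (p + 2) p"
      using AG_with_tree invariant by (intro exI[of _ "card A"]) simp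
  qed (use invariant tree_if_AG_char_fun in auto)
qed

end
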